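(* In the two-period model with a transparent bailout and $p_0<p_g<1-S$, in any delayed stimulation equilibrium we have $\hat\theta=\theta_0$, $\hat\theta_g\in[\theta_0,p_g+S)$ and $\theta_2=p_g+S$. Moreover: (i) types $\theta\le\theta_0$ sell in both periods, and a positive (possibly full) measure of them accept the bailout; (ii) among types $\theta\le\theta_0$, those that sell to the market at $t=1$ (if any) receive price $p_0$ at $t=1$ and price $p_g$ from the $t=2$ market, while those that accept the bailout sell at price $p_0$ at $t=2$; both groups have the same average asset value $\mathbb{E}[\theta\mid\theta\le\theta_0]=p_0$; (iii) types $\theta\in(\theta_0,\hat\theta_g]$ sell only at $t=1$, to the government at $p_g$; (iv) types $\theta\in(\hat\theta_g,p_g+S]$ sell only at $t=2$, at price $p_g$, and types $\theta>p_g+S$ never sell.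
   Context: Two-period model: a continuum of firms with privately known type $\theta\in[0,1]$, cdf $F$, density $f>0$, $f$ strictly log-concave, and for every $b\in(0,1]$ the map $a\mapsto 2\mathbb{E}[\theta\mid a<\theta<b]-\mathbb{E}[\theta\mid\theta\le a]$ is increasing on $(0,b)$. A type-$\theta$ firm holds one unit of an asset worth $\theta$ in each of two periods $t=1,2$. In each period it has a project with cost $I>0$ and net return $S>0$ that can be funded only by selling that period's unit; selling that unit at price $p\ge I$ yields $p+S$ for that period, not selling yields $\theta$. A firm's total payoff is the sum of the two periods' payoffs (period-2 payoff weighted by $\delta<1$, and equilibria are considered in the limit $\delta\to1$). In each period competitive short-lived risk-neutral buyers make price offers (Bertrand; break even in expectation; indifferent buyers buy). At $t=1$ only, the government offers to buy one unit at price $p_g$; each firm then sells its $t=1$ unit to the government, to the market, or not at all. Sales to the market at $t=1$ are not observed by $t=2$ buyers. Transparent bailout: acceptance of the government offer is observed by $t=2$ buyers, who may make different offers to bailout recipients and non-recipients. Equilibrium means perfect Bayesian equilibrium. Laissez-faire: $\theta_0\in(0,1)$ uniquely solves $\theta_0-S=\mathbb{E}[\theta\mid\theta\le\theta_0]$, $p_0:=\mathbb{E}[\theta\mid\theta\le\theta_0]$, and $p_0\ge I$. Equilibrium structure: every equilibrium has cutoffs $0<\hat\theta\le\hat\theta_g\le\theta_2$ such that types $\theta\le\hat\theta$ sell in both periods, types in $(\hat\theta,\hat\theta_g]$ sell only at $t=1$ to the government, types in $(\hat\theta_g,\theta_2]$ sell only at $t=2$, and types above $\theta_2$ never sell. A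 short-lived stimulation equilibrium is an equilibrium with $\hat\theta_g=\theta_2$; a delayed stimulation equilibrium is one with $\hat\theta_g<\theta_2$. *)

theory Defs
  imports "HOL-Analysis.Analysis"
begin

text \<open>Types are distributed on [0,1] with density f.  mass f A is the probability
  of the event {theta in A}; cexp f A is the conditional expectation E[theta | theta in A].\<close>

definition mass :: "(real \<Rightarrow> real) \<Rightarrow> real set \<Rightarrow> real" where
  "mass f A = set_lebesgue_integral lborel (A \<inter> {0..1}) f"

definition cexp :: "(real \<Rightarrow> real) \<Rightarrow> real set \<Rightarrow> real" where
  "cexp f A = set_lebesgue_integral lborel (A \<inter> {0..1}) (\<lambda>x. x * f x) / mass f A"

definition strictly_concave_on :: "real set \<Rightarrow> (real \<Rightarrow> real) \<Rightarrow> bool" where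
  "strictly_concave_on S g \<longleftrightarrow> convex S \<and>
     (\<forall>x\<in>S. \<forall>y\<in>S. \<forall>u. x \<noteq> y \<and> 0 < u \<and> u < 1 \<longrightarrow>
        g (u * x + (1 - u) * y) > u * g x + (1 - u) * g y)"

definition strictly_log_concave_on :: "real set \<Rightarrow> (real \<Rightarrow> real) \<Rightarrow> bool" where
  "strictly_log_concave_on S f \<longleftrightarrow> (\<forall>x\<in>S. f x > 0) \<and> strictly_concave_on S (\<lambda>x. ln (f x))"

datatype act1 = Gov | Mkt | NoSale

text \<open>Value of selling a unit at price p: p + S if the project can be funded (p >= I), else p.\<close>
definition sale_val :: "real \<Rightarrow> real \<Rightarrow> real \<Rightarrow> real" where
  "sale_val I S p = (if I \<le> p then p + S else p)"

text \<open>Period-2 price faced by a firm, given its (observed) bailout status: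
  qg for bailout recipients, qn for non-recipients (market sales at t=1 are unobserved).\<close>
definition price2 :: "real \<Rightarrow> real \<Rightarrow> act1 \<Rightarrow> real" where
  "price2 qg qn a = (if a = Gov then qg else qn)"

definition flow1 :: "real \<Rightarrow> real \<Rightarrow> real \<Rightarrow> real \<Rightarrow> act1 \<Rightarrow> real \<Rightarrow> real" where
  "flow1 I S pg p1 a th = (case a of Gov \<Rightarrow> sale_val I S pg | Mkt \<Rightarrow> sale_val I S p1 | NoSale \<Rightarrow> th)"

definition cont :: "real \<Rightarrow> real \<Rightarrow> real \<Rightarrow> real \<Rightarrow> act1 \<Rightarrow> real \<Rightarrow> real" where
  "cont I S qg qn a th = max th (sale_val I S (price2 qg qn a))"

text \<open>Total (undiscounted, delta -> 1) payoff of type th under strategy (s1, s2).\<close>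
definition payoff :: "real \<Rightarrow> real \<Rightarrow> real \<Rightarrow> real \<Rightarrow> real \<Rightarrow> real \<Rightarrow>
    (real \<Rightarrow> act1) \<Rightarrow> (real \<Rightarrow> act1 \<Rightarrow> bool) \<Rightarrow> real \<Rightarrow> real" where
  "payoff I S pg p1 qg qn s1 s2 th =
     flow1 I S pg p1 (s1 th) th +
     (if s2 th (s1 th) then sale_val I S (price2 qg qn (s1 th)) else th)"

text \<open>Perfect Bayesian equilibrium with a transparent bailout (limit delta -> 1).
  s1 th : period-1 action of type th;  s2 th a : whether type th sells at t=2 after
  period-1 action a;  p1 : t=1 market price;  qg / qn : t=2 market prices offered to
  bailout recipients / non-recipients.  Conditions: measurable strategies; sequential
  optimality of every type at t=2 (after every own t=1 action) and at t=1; buyers break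
  even in every market with positive trade; and no buyer can profitably deviate by
  offering a higher price (Bertrand competition), where the deviating offer attracts the
  types that strictly gain from accepting it.\<close>
definition transparent_eq ::
  "(real \<Rightarrow> real) \<Rightarrow> real \<Rightarrow> real \<Rightarrow> real \<Rightarrow>
   (real \<Rightarrow> act1) \<Rightarrow> (real \<Rightarrow> act1 \<Rightarrow> bool) \<Rightarrow> real \<Rightarrow> real \<Rightarrow> real \<Rightarrow> bool" where
  "transparent_eq f I S pg s1 s2 p1 qg qn \<longleftrightarrow>
     (\<forall>a. {th. s1 th = a} \<in> sets lborel \<and> {th. s2 th a} \<in> sets lborel) \<and>
     \<comment> \<open>t=2 optimality, after every own t=1 action\<close>
     (\<forall>th\<in>{0..1}. \<forall>a.
        (s2 th a \<longrightarrow> th \<le> sale_val I S (price2 qg qn a)) \<and>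
        (\<not> s2 th a \<longrightarrow> sale_val I S (price2 qg qn a) \<le> th)) \<and>
     \<comment> \<open>t=1 optimality\<close>
     (\<forall>th\<in>{0..1}. \<forall>a.
        flow1 I S pg p1 a th + cont I S qg qn a th \<le> payoff I S pg p1 qg qn s1 s2 th) \<and>
     \<comment> \<open>break-even of buyers\<close>
     (mass f {th. s1 th = Mkt} > 0 \<longrightarrow> p1 = cexp f {th. s1 th = Mkt}) \<and>
     (mass f {th. s1 th = Gov \<and> s2 th Gov} > 0 \<longrightarrow> qg = cexp f {th. s1 th = Gov \<and> s2 th Gov}) \<and>
     (mass f {th. s1 th \<noteq> Gov \<and> s2 th (s1 th)} > 0 \<longrightarrow>
        qn = cexp f {th. s1 th \<noteq> Gov \<and> s2 th (s1 th)}) \<and>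
     \<comment> \<open>no profitable upward price deviation (Bertrand)\<close>
     (\<forall>p'>p1. set_lebesgue_integral lborel
         ({th. sale_val I S p' + cont I S qg qn Mkt th > payoff I S pg p1 qg qn s1 s2 th} \<inter> {0..1})
         (\<lambda>x. (x - p') * f x) \<le> 0) \<and>
     (\<forall>p'>qg. set_lebesgue_integral lborel
         ({th. s1 th = Gov \<and> sale_val I S p' > th} \<inter> {0..1}) (\<lambda>x. (x - p') * f x) \<le> 0) \<and>
     (\<forall>p'>qn. set_lebesgue_integral lborel
         ({th. s1 th \<noteq> Gov \<and> sale_val I S p' > th} \<inter> {0..1}) (\<lambda>x. (x - p') * f x) \<le> 0)"

definition sells1 :: "(real \<Rightarrow> act1) \<Rightarrow> real \<Rightarrow> bool" where
  "sells1 s1 th \<longleftrightarrow> s1 th \<noteq> NoSale"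

definition sells2 :: "(real \<Rightarrow> act1) \<Rightarrow> (real \<Rightarrow> act1 \<Rightarrow> bool) \<Rightarrow> real \<Rightarrow> bool" where
  "sells2 s1 s2 th \<longleftrightarrow> s2 th (s1 th)"

definition has_cutoffs ::
  "(real \<Rightarrow> act1) \<Rightarrow> (real \<Rightarrow> act1 \<Rightarrow> bool) \<Rightarrow> real \<Rightarrow> real \<Rightarrow> real \<Rightarrow> bool" where
  "has_cutoffs s1 s2 th_hat th_g th2 \<longleftrightarrow>
     0 < th_hat \<and> th_hat \<le> th_g \<and> th_g \<le> th2 \<and>
     (\<forall>th\<in>{0..1}.
        (th \<le> th_hat \<longrightarrow> sells1 s1 th \<and> sells2 s1 s2 th) \<and>
        (th_hat < th \<and> th \<le> th_g \<longrightarrow> s1 th = Gov \<and> \<not> sells2 s1 s2 th) \<and>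
        (th_g < th \<and> th \<le> th2 \<longrightarrow> \<not> sells1 s1 th \<and> sells2 s1 s2 th) \<and>
        (th2 < th \<longrightarrow> \<not> sells1 s1 th \<and> \<not> sells2 s1 s2 th))"

end

theory Submission
  imports Defs
begin

text \<open>
  Strict log-concavity of \<open>f\<close> makes \<open>u \<mapsto> f u / f (u - h)\<close> nonincreasing, so the law of \<open>\<theta>\<close>
  given \<open>\<theta> \<le> x + h\<close> crosses the law of \<open>\<theta> + h\<close> given \<open>\<theta> \<le> x\<close> once, from above; hence
  \<open>E[\<theta> | \<theta> \<le> x + h] \<le> E[\<theta> | \<theta> \<le> x] + h\<close>, and \<open>x - S - E[\<theta> | \<theta> \<le> x]\<close> changes sign only at \<open>th0\<close>.

  In the equilibrium, the types just above \<open>th_g\<close> wait and sell at \<open>t = 2\<close>; indifference conditions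
  then give \<open>qn = pg\<close> and \<open>th2 = pg + S\<close>, and not all types can sell twice, since the top type would
  need a pooled price above \<open>1 - S\<close>. The types below \<open>th_hat\<close> sell in both periods, and the
  marginal one is indifferent, which pins the \<open>t = 1\<close> market price and the \<open>t = 2\<close> price for
  bailout recipients at \<open>th_hat - S\<close>; break-even of both pools turns this into
  \<open>E[\<theta> | \<theta> \<le> th_hat] = th_hat - S\<close>, i.e. \<open>th_hat = th0\<close>. Each way this
  chain could fail would let a buyer outbid the market (at \<open>t = 1\<close>, or for bailout recipients at
  \<open>t = 2\<close>) and attract a pool worth more than the bid.
\<close>

definition moment :: "(real \<Rightarrow> real) \<Rightarrow> real set \<Rightarrow> real" where
  "moment f A = set_lebesgue_integral lborel (A \<inter> {0..1}) (\<lambda>x. x * f x)"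

lemma cexp_eq_moment_div_mass: "cexp f A = moment f A / mass f A"
  by (simp add: cexp_def moment_def)

lemma
  assumes "A \<inter> {0..1} = B \<inter> {0..1}"
  shows mass_cong: "mass f A = mass f B"
    and moment_cong: "moment f A = moment f B"
    and cexp_cong: "cexp f A = cexp f B"
  using assms by (auto simp: mass_def moment_def cexp_def)

lemma set_integral_null_set:
  "AE x in lborel. x \<notin> X \<Longrightarrow> set_lebesgue_integral lborel X g = 0"
  unfolding set_lebesgue_integral_def
  by (rule integral_eq_zero_AE) (auto elim!: eventually_mono simp: indicator_def)

lemma
  fixes g :: "real \<Rightarrow> real"
  shows integrable_indicator_shift:
      "integrable lborel (\<lambda>u. indicator {h..x+h} u * g (u - h)) \<longleftrightarrow>
       integrable lborel (\<lambda>v. indicator {0..x} v * g v)"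
    and integral_indicator_shift:
      "integral\<^sup>L lborel (\<lambda>u. indicator {h..x+h} u * g (u - h)) =
       integral\<^sup>L lborel (\<lambda>v. indicator {0..x} v * g v)"
proof -
  have e: "(\<lambda>v. indicator {h..x+h} (h + 1 * v) * g (h + 1 * v - h)) = (\<lambda>v. indicator {0..x} v * g v)"
    by (auto simp: indicator_def fun_eq_iff)
  show "integrable lborel (\<lambda>u. indicator {h..x+h} u * g (u - h)) \<longleftrightarrow>
        integrable lborel (\<lambda>v. indicator {0..x} v * g v)"
    using lborel_integrable_real_affine_iff[of 1 "\<lambda>u. indicator {h..x+h} u * g (u - h)" h] e by simp
  show "integral\<^sup>L lborel (\<lambda>u. indicator {h..x+h} u * g (u - h)) =
        integral\<^sup>L lborel (\<lambda>v. indicator {0..x} v * g v)"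
    using lborel_integral_real_affine[of 1 "\<lambda>u. indicator {h..x+h} u * g (u - h)" h] e by simp
qed

lemma single_crossing_point:
  fixes w :: "real \<Rightarrow> real"
  assumes left: "\<And>u. u < l \<Longrightarrow> 0 \<le> w u"
    and right: "\<And>u. r < u \<Longrightarrow> w u \<le> 0"
    and down: "\<And>u v. u < v \<Longrightarrow> 0 < w v \<Longrightarrow> 0 \<le> w u"
  obtains c where "\<And>u. (u - c) * w u \<le> 0"
proof
  let ?X = "insert l {u. 0 < w u}"
  have bdd: "bdd_above ?X"
    using right by (intro bdd_aboveI[of _ "max l r"]) (force simp: not_le[symmetric])
  fix u
  show "(u - Sup ?X) * w u \<le> 0"
  proof (cases "u < Sup ?X")
    case True
    then obtain v where "v \<in> ?X" "u < v"
      using less_cSup_iff[of ?X u] bdd by auto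
    then have "0 \<le> w u" using left down by auto
    with True show ?thesis by (simp add: mult_nonpos_nonneg)
  next
    case False
    have "u \<le> Sup ?X" if "0 < w u" using that bdd by (intro cSup_upper) auto
    with False show ?thesis by (cases "0 < w u") (auto simp: mult_nonneg_nonpos)
  qed
qed

lemma integral_mean_le_of_single_crossing:
  fixes P Q :: "real \<Rightarrow> real"
  assumes P: "integrable lborel P" "integrable lborel (\<lambda>u. u * P u)"
    and Q: "integrable lborel Q" "integrable lborel (\<lambda>u. u * Q u)"
    and same_mass: "integral\<^sup>L lborel P = integral\<^sup>L lborel Q"
    and crossing: "\<And>u. (u - c) * (P u - Q u) \<le> 0"
  shows "integral\<^sup>L lborel (\<lambda>u. u * P u) \<le> integral\<^sup>L lborel (\<lambda>u. u * Q u)"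
proof -
  have e: "(\<lambda>u. (u - c) * (P u - Q u)) = (\<lambda>u. (u * P u - u * Q u) - (c * P u - c * Q u))"
    by (auto simp: fun_eq_iff algebra_simps)
  have "0 \<le> integral\<^sup>L lborel (\<lambda>u. - ((u - c) * (P u - Q u)))"
    using crossing by (intro integral_nonneg_AE) (simp add: not_le)
  also have "\<dots> = - ((integral\<^sup>L lborel (\<lambda>u. u * P u) - integral\<^sup>L lborel (\<lambda>u. u * Q u))
                   - (c * integral\<^sup>L lborel P - c * integral\<^sup>L lborel Q))"
    unfolding integral_minus e using P Q by simp
  finally show ?thesis using same_mass by simp
qed

locale density =
  fixes f :: "real \<Rightarrow> real"
  assumes f_measurable: "f \<in> borel_measurable lborel"
    and f_integrable: "set_integrable lborel {0..1} f"
    and f_pos: "\<forall>x\<in>{0..1}. f x > 0"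
begin

lemma set_integrable_density: "A \<in> sets lborel \<Longrightarrow> set_integrable lborel (A \<inter> {0..1}) f"
  by (rule set_integrable_subset[OF f_integrable]) auto

lemma set_integrable_moment:
  assumes "A \<in> sets lborel"
  shows "set_integrable lborel (A \<inter> {0..1}) (\<lambda>x. x * f x)"
proof -
  have "set_integrable lborel {0..1} (\<lambda>x. x * f x)"
  proof (rule set_integrable_bound[OF f_integrable])
    show "set_borel_measurable lborel {0..1} (\<lambda>x. x * f x)"
      unfolding set_borel_measurable_def using f_measurable by measurable
    show "AE x\<in>{0..1} in lborel. norm (x * f x) \<le> norm (f x)"
      by (auto simp: abs_mult intro!: mult_left_le_one_le)
  qed
  then show ?thesis by (rule set_integrable_subset) (use assms in auto)
qed

lemma
  assumes "A \<in> sets lborel"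
  shows set_integrable_excess: "set_integrable lborel (A \<inter> {0..1}) (\<lambda>x. (x - p) * f x)"
    and set_integral_excess:
      "set_lebesgue_integral lborel (A \<inter> {0..1}) (\<lambda>x. (x - p) * f x) = moment f A - p * mass f A"
proof -
  note integrable = set_integrable_moment[OF assms]
    set_integrable_mult_right[OF set_integrable_density[OF assms], of p]
  have e: "(\<lambda>x. (x - p) * f x) = (\<lambda>x. x * f x - p * f x)"
    by (simp add: fun_eq_iff left_diff_distrib)
  show "set_integrable lborel (A \<inter> {0..1}) (\<lambda>x. (x - p) * f x)"
    unfolding e using integrable by (rule set_integral_diff(1))
  show "set_lebesgue_integral lborel (A \<inter> {0..1}) (\<lambda>x. (x - p) * f x) = moment f A - p * mass f A"
    unfolding e using integrable
    by (subst set_integral_diff(2)) (auto simp: moment_def mass_def set_integral_mult_right)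
qed

lemma
  assumes X: "X \<in> sets lborel" "X \<subseteq> {0..1}"
    and integrable: "set_integrable lborel X (\<lambda>x. h x * f x)"
    and h_nonneg: "\<forall>x\<in>X. h x \<ge> 0"
  shows set_integral_weighted_nonneg: "set_lebesgue_integral lborel X (\<lambda>x. h x * f x) \<ge> 0"
    and set_integral_weighted_eq_0:
      "set_lebesgue_integral lborel X (\<lambda>x. h x * f x) = 0 \<Longrightarrow> AE x in lborel. x \<in> X \<longrightarrow> h x = 0"
proof -
  have nonneg: "0 \<le> indicator X x *\<^sub>R (h x * f x)" for x
  proof (cases "x \<in> X")
    case True
    then have "0 \<le> h x" "0 < f x" using h_nonneg f_pos X(2) by auto
    then show ?thesis using True by simp
  qed simp
  show "set_lebesgue_integral lborel X (\<lambda>x. h x * f x) \<ge> 0"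
    unfolding set_lebesgue_integral_def using nonneg by (intro integral_nonneg_AE) auto
  assume "set_lebesgue_integral lborel X (\<lambda>x. h x * f x) = 0"
  then have "AE x in lborel. indicator X x *\<^sub>R (h x * f x) = 0"
    using integrable nonneg unfolding set_lebesgue_integral_def set_integrable_def
    by (subst integral_nonneg_eq_0_iff_AE[symmetric]) auto
  then show "AE x in lborel. x \<in> X \<longrightarrow> h x = 0"
    by eventually_elim (use f_pos X(2) in \<open>fastforce simp: indicator_def\<close>)
qed

lemma mass_nonneg: "A \<in> sets lborel \<Longrightarrow> 0 \<le> mass f A"
  using set_integral_weighted_nonneg[of "A \<inter> {0..1}" "\<lambda>_. 1"] set_integrable_density
  by (auto simp: mass_def)

lemma AE_notin_of_mass_eq_0:
  "A \<in> sets lborel \<Longrightarrow> mass f A = 0 \<Longrightarrow> AE x in lborel. x \<notin> A \<inter> {0..1}"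
  using set_integral_weighted_eq_0[of "A \<inter> {0..1}" "\<lambda>_. 1"] set_integrable_density
  by (auto simp: mass_def)

lemma mass_pos_of_interval:
  assumes "0 \<le> u" "u < v" "v \<le> 1" "{u<..<v} \<subseteq> A" "A \<in> sets lborel"
  shows "0 < mass f A"
proof (rule ccontr)
  assume "\<not> 0 < mass f A"
  then have "mass f A = 0" using mass_nonneg[OF assms(5)] by auto
  from AE_notin_of_mass_eq_0[OF assms(5) this]
  have "AE x in lborel. x \<notin> {u<..<v}"
    by eventually_elim (use assms in auto)
  then have "emeasure lborel {u<..<v} = 0"
    by (subst (asm) AE_iff_measurable[of "{u<..<v}"]) auto
  then show False using assms by simp
qed

lemma le_of_bound_off_null_set:
  assumes "0 < u" "u \<le> 1" "B \<in> sets lborel" "mass f B = 0"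
    and bound: "\<And>x. 0 \<le> x \<Longrightarrow> x < u \<Longrightarrow> x \<notin> B \<Longrightarrow> x \<le> z"
  shows "u \<le> z"
proof (rule ccontr)
  assume "\<not> u \<le> z"
  have "{max 0 z<..<u} \<subseteq> B"
  proof
    fix x assume "x \<in> {max 0 z<..<u}"
    then show "x \<in> B" using bound[of x] by (cases "x \<in> B") auto
  qed
  then have "0 < mass f B"
    using assms \<open>\<not> u \<le> z\<close> by (intro mass_pos_of_interval[of "max 0 z" u]) auto
  then show False using assms by simp
qed

lemma moment_eq_mass_cexp: "A \<in> sets lborel \<Longrightarrow> moment f A = mass f A * cexp f A"
proof (cases "mass f A = 0")
  case True
  assume "A \<in> sets lborel"
  then show ?thesis
    using True set_integral_null_set[OF AE_notin_of_mass_eq_0] by (simp add: moment_def)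
qed (simp add: cexp_eq_moment_div_mass)

lemma
  assumes "A \<in> sets lborel" "B \<in> sets lborel" "A \<inter> B = {}"
  shows mass_Un: "mass f (A \<union> B) = mass f A + mass f B"
    and moment_Un: "moment f (A \<union> B) = moment f A + moment f B"
proof -
  have e: "(A \<union> B) \<inter> {0..1} = (A \<inter> {0..1}) \<union> (B \<inter> {0..1})" by auto
  have d: "(A \<inter> {0..1}) \<inter> (B \<inter> {0..1}) = {}" using assms by auto
  show "mass f (A \<union> B) = mass f A + mass f B"
    unfolding mass_def e using set_integral_Un[OF d set_integrable_density set_integrable_density] assms
    by auto
  show "moment f (A \<union> B) = moment f A + moment f B"
    unfolding moment_def e using set_integral_Un[OF d set_integrable_moment set_integrable_moment] assms
    by auto
qed

lemma mass_mono:
  assumes "A \<in> sets lborel" "B \<in> sets lborel" "A \<subseteq> B"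
  shows "mass f A \<le> mass f B"
proof -
  have "mass f B = mass f A + mass f (B - A)"
    using mass_Un[of A "B - A"] assms by (simp add: Un_absorb1)
  then show ?thesis using mass_nonneg[of "B - A"] assms by auto
qed

lemma
  assumes "A \<in> sets lborel" "B \<in> sets lborel" "A \<subseteq> B" "mass f (B - A) = 0"
  shows mass_null_diff: "mass f A = mass f B"
    and moment_null_diff: "moment f A = moment f B"
    and cexp_null_diff: "cexp f A = cexp f B"
proof -
  have B: "B = A \<union> (B - A)" using assms by auto
  have "moment f (B - A) = 0"
    unfolding moment_def using assms by (intro set_integral_null_set AE_notin_of_mass_eq_0) auto
  then show "mass f A = mass f B" "moment f A = moment f B"
    using mass_Un[of A "B - A"] moment_Un[of A "B - A"] assms B by auto
  then show "cexp f A = cexp f B" by (simp add: cexp_eq_moment_div_mass)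
qed

lemma moment_sign_of_sign:
  assumes A: "A \<in> sets lborel" and pos: "0 < mass f A"
    and sign: "\<forall>x\<in>A \<inter> {0..1}. 0 \<le> k * (x - u)" and k: "k \<noteq> 0"
  shows "0 < k * (moment f A - u * mass f A)"
proof -
  let ?X = "A \<inter> {0..1}"
  have integrable: "set_integrable lborel ?X (\<lambda>x. k * (x - u) * f x)"
    using set_integrable_mult_right[OF set_integrable_excess[OF A, of u], of k] by (simp add: mult.assoc)
  have integral: "set_lebesgue_integral lborel ?X (\<lambda>x. k * (x - u) * f x) = k * (moment f A - u * mass f A)"
    using set_integral_excess[OF A, of u] by (simp add: mult.assoc set_integral_mult_right)
  have "0 \<le> k * (moment f A - u * mass f A)"
    using set_integral_weighted_nonneg[OF _ _ integrable] A sign integral by auto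
  moreover have "k * (moment f A - u * mass f A) \<noteq> 0"
  proof
    assume "k * (moment f A - u * mass f A) = 0"
    then have "AE x in lborel. x \<in> ?X \<longrightarrow> k * (x - u) = 0"
      using set_integral_weighted_eq_0[OF _ _ integrable] A sign integral by auto
    then have "AE x in lborel. x \<notin> ?X"
      using AE_lborel_singleton[of u] by eventually_elim (use k in auto)
    then have "mass f A = 0" unfolding mass_def by (rule set_integral_null_set)
    then show False using pos by simp
  qed
  ultimately show ?thesis by linarith
qed

lemma cexp_greater_of_ge:
  assumes "A \<in> sets lborel" "0 < mass f A" "\<forall>x\<in>A \<inter> {0..1}. u \<le> x"
  shows "u < cexp f A"
proof -
  have "0 < 1 * (moment f A - u * mass f A)"
    by (rule moment_sign_of_sign) (use assms in auto)
  then show ?thesis using assms(2) by (simp add: cexp_eq_moment_div_mass pos_less_divide_eq)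
qed

lemma cexp_less_of_le:
  assumes "A \<in> sets lborel" "0 < mass f A" "\<forall>x\<in>A \<inter> {0..1}. x \<le> v"
  shows "cexp f A < v"
proof -
  have "0 < -1 * (moment f A - v * mass f A)"
    by (rule moment_sign_of_sign) (use assms in auto)
  then show ?thesis using assms(2) by (simp add: cexp_eq_moment_div_mass pos_divide_less_eq)
qed

lemma
  shows mass_lessThan: "mass f {..<x} = mass f {..x}"
    and moment_lessThan: "moment f {..<x} = moment f {..x}"
proof -
  have "mass f {x} = 0"
    unfolding mass_def
    by (rule set_integral_null_set) (use AE_lborel_singleton[of x] in \<open>auto elim: eventually_mono\<close>)
  moreover have "{..x} - {..<x} = {x}" by auto
  ultimately have null: "mass f ({..x} - {..<x}) = 0" by simp
  show "mass f {..<x} = mass f {..x}"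
    by (rule mass_null_diff[OF _ _ _ null]) auto
  show "moment f {..<x} = moment f {..x}"
    by (rule moment_null_diff[OF _ _ _ null]) auto
qed

lemma mass_atMost_pos: "0 < x \<Longrightarrow> x \<le> 1 \<Longrightarrow> 0 < mass f {..x}"
  by (rule mass_pos_of_interval[of 0 x]) auto

lemma cexp_atMost_strict_mono:
  assumes "0 < u" "u < v" "v \<le> 1"
  shows "cexp f {..u} < cexp f {..v}"
proof -
  have d: "{..u} \<inter> {u<..v} = {}" and U: "{..v} = {..u} \<union> {u<..v}" using assms by auto
  have mass_v: "mass f {..v} = mass f {..u} + mass f {u<..v}"
    unfolding U by (rule mass_Un[OF _ _ d]) auto
  have moment_v: "moment f {..v} = moment f {..u} + moment f {u<..v}"
    unfolding U by (rule moment_Un[OF _ _ d]) auto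
  have pos: "0 < mass f {..u}" "0 < mass f {u<..v}"
    using assms by (auto intro: mass_atMost_pos mass_pos_of_interval[of u v])
  have "cexp f {..u} < u" by (rule cexp_less_of_le[OF _ pos(1)]) auto
  also have "u < cexp f {u<..v}" by (rule cexp_greater_of_ge[OF _ pos(2)]) auto
  finally have "mass f {u<..v} * cexp f {..u} < mass f {u<..v} * cexp f {u<..v}"
    using pos(2) by simp
  moreover have "moment f {..u} = mass f {..u} * cexp f {..u}"
    and "moment f {u<..v} = mass f {u<..v} * cexp f {u<..v}"
    by (simp_all add: moment_eq_mass_cexp)
  ultimately have "mass f {..v} * cexp f {..u} < moment f {..v}"
    unfolding mass_v moment_v by (simp add: distrib_right)
  moreover have "0 < mass f {..v}" using mass_v pos by linarith
  ultimately show ?thesis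
    by (simp add: cexp_eq_moment_div_mass[of f "{..v}"] pos_less_divide_eq mult.commute)
qed


lemma
  assumes "z \<le> 1"
  shows integrable_indicator_density: "integrable lborel (\<lambda>u. indicator {0..z} u * f u)"
    and integrable_indicator_moment: "integrable lborel (\<lambda>u. indicator {0..z} u * (u * f u))"
    and integral_indicator_density:
      "integral\<^sup>L lborel (\<lambda>u. indicator {0..z} u * f u) = mass f {..z}"
    and integral_indicator_moment:
      "integral\<^sup>L lborel (\<lambda>u. indicator {0..z} u * (u * f u)) = moment f {..z}"
proof -
  have e: "{..z} \<inter> {0..1} = {0..z}" using assms by auto
  show "integrable lborel (\<lambda>u. indicator {0..z} u * f u)"
    "integrable lborel (\<lambda>u. indicator {0..z} u * (u * f u))"
    "integral\<^sup>L lborel (\<lambda>u. indicator {0..z} u * f u) = mass f {..z}"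
    "integral\<^sup>L lborel (\<lambda>u. indicator {0..z} u * (u * f u)) = moment f {..z}"
    using set_integrable_density[of "{..z}", unfolded e] set_integrable_moment[of "{..z}", unfolded e]
    unfolding mass_def moment_def e set_integrable_def set_lebesgue_integral_def by simp_all
qed

lemma
  assumes "x \<le> 1"
  shows integrable_shifted_density: "integrable lborel (\<lambda>u. indicator {h..x+h} u * f (u - h))"
    and integrable_shifted_moment: "integrable lborel (\<lambda>u. u * (indicator {h..x+h} u * f (u - h)))"
    and integral_shifted_density:
      "integral\<^sup>L lborel (\<lambda>u. indicator {h..x+h} u * f (u - h)) = mass f {..x}"
    and integral_shifted_moment:
      "integral\<^sup>L lborel (\<lambda>u. u * (indicator {h..x+h} u * f (u - h))) = moment f {..x} + h * mass f {..x}"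
proof -
  have e: "(\<lambda>u. u * (indicator {h..x+h} u * f (u - h)))
      = (\<lambda>u. indicator {h..x+h} u * ((u - h + h) * f (u - h)))"
    by (simp add: fun_eq_iff mult_ac)
  have split: "(\<lambda>v. indicator {0..x} v * ((v + h) * f v))
      = (\<lambda>v. indicator {0..x} v * (v * f v) + h * (indicator {0..x} v * f v))"
    by (simp add: fun_eq_iff algebra_simps)
  note density = integrable_indicator_density[OF assms] integral_indicator_density[OF assms]
    and moment = integrable_indicator_moment[OF assms] integral_indicator_moment[OF assms]
  show "integrable lborel (\<lambda>u. indicator {h..x+h} u * f (u - h))"
    "integral\<^sup>L lborel (\<lambda>u. indicator {h..x+h} u * f (u - h)) = mass f {..x}"
    unfolding integrable_indicator_shift integral_indicator_shift using density by simp_all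
  show "integrable lborel (\<lambda>u. u * (indicator {h..x+h} u * f (u - h)))"
    "integral\<^sup>L lborel (\<lambda>u. u * (indicator {h..x+h} u * f (u - h))) = moment f {..x} + h * mass f {..x}"
    unfolding e integrable_indicator_shift[of h x "\<lambda>v. (v + h) * f v"]
      integral_indicator_shift[of h x "\<lambda>v. (v + h) * f v"] split
    using density moment by simp_all
qed

end

locale log_concave_density = density +
  assumes log_concave: "strictly_log_concave_on {0..1} f"
begin

lemma ln_density_chord:
  assumes "0 \<le> a" "a < b" "b < c" "c \<le> 1"
  shows "(c - b) * ln (f a) + (b - a) * ln (f c) \<le> (c - a) * ln (f b)"
proof -
  define u where "u = (c - b) / (c - a)"
  have u: "0 < u" "u < 1" "u * (c - a) = c - b" using assms by (auto simp: u_def)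
  have b: "u * a + (1 - u) * c = b"
    using u(3) by (simp add: algebra_simps)
  have "u * ln (f a) + (1 - u) * ln (f c) < ln (f (u * a + (1 - u) * c))"
    using log_concave assms u
    unfolding strictly_log_concave_on_def strictly_concave_on_def by auto
  then have "(c - a) * (u * ln (f a) + (1 - u) * ln (f c)) \<le> (c - a) * ln (f b)"
    using assms b by (intro mult_left_mono) auto
  moreover have "(c - a) * (u * A + (1 - u) * C) = (u * (c - a)) * A + ((c - a) - u * (c - a)) * C"
    for A C by (simp add: algebra_simps)
  ultimately show ?thesis unfolding u(3) by simp
qed

lemma density_shift_ratio_antimono:
  assumes "0 < h" "h \<le> u1" "u1 \<le> u2" "u2 \<le> 1"
  shows "f u2 * f (u1 - h) \<le> f u1 * f (u2 - h)"
proof -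
  have "ln (f u2) - ln (f (u2 - h)) \<le> ln (f u1) - ln (f (u1 - h))"
  proof (cases "u1 = u2")
    case False
    define L where "L = u2 - u1 + h"
    have L: "0 < L" using assms False by (simp add: L_def)
    have "L * (ln (f u2) - ln (f (u2 - h))) \<le> h * (ln (f u2) - ln (f (u1 - h)))"
      using ln_density_chord[of "u1 - h" "u2 - h" u2] assms False
      by (simp add: L_def algebra_simps)
    also have "h * (ln (f u2) - ln (f (u1 - h))) \<le> L * (ln (f u1) - ln (f (u1 - h)))"
      using ln_density_chord[of "u1 - h" u1 u2] assms False
      by (simp add: L_def algebra_simps)
    finally show ?thesis using L by (simp add: mult_le_cancel_left_pos)
  qed simp
  moreover have pos: "0 < f u2" "0 < f (u1 - h)" "0 < f u1" "0 < f (u2 - h)"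
    using f_pos assms by auto
  ultimately have "ln (f u2 * f (u1 - h)) \<le> ln (f u1 * f (u2 - h))"
    by (simp add: ln_mult)
  then show ?thesis using pos by simp
qed

lemma shifted_density_single_crossing:
  assumes h: "0 < h" and x: "x + h \<le> 1" and a: "0 < a" and b: "0 < b"
  obtains c where
    "\<And>u. (u - c) * (indicator {0..x+h} u * f u / a - indicator {h..x+h} u * f (u - h) / b) \<le> 0"
proof -
  define w where "w u = indicator {0..x+h} u * f u / a - indicator {h..x+h} u * f (u - h) / b" for u
  have f_pos': "0 < f u" if "0 \<le> u" "u \<le> x + h" for u
    using f_pos x that by auto
  have w_inside: "w u = f u / a - f (u - h) / b" if "h \<le> u" "u \<le> x + h" for u
    using that h by (simp add: w_def)
  have w_left: "0 \<le> w u" if "u < h" for u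
    using that f_pos'[of u] a h by (auto simp: w_def indicator_def)
  have w_right: "w u \<le> 0" if "x + h < u" for u
    using that h by (auto simp: w_def)
  obtain c where "\<And>u. (u - c) * w u \<le> 0"
  proof (rule single_crossing_point[of h w "x + h"])
    show "0 \<le> w u" if "u < h" for u using w_left that .
    show "w u \<le> 0" if "x + h < u" for u using w_right that .
    show "0 \<le> w u" if "u < v" "0 < w v" for u v
    proof (cases "h \<le> u")
      case True
      have v: "h \<le> v" "v \<le> x + h"
        using that True w_right[of v] by (auto simp: not_le[symmetric])
      have pos: "0 < f u" "0 < f v" using f_pos' True v h that(1) by auto
      \<comment> \<open>log-concavity: \<open>f u / f (u - h)\<close> is nonincreasing in \<open>u\<close>\<close>
      have "f v * (f (u - h) / b) \<le> f u * (f (v - h) / b)"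
        using divide_right_mono[OF density_shift_ratio_antimono[of h u v], of b] True v that(1) b h x
        by simp
      also have "\<dots> \<le> f u * (f v / a)"
        using that(2) w_inside[OF v] pos by (intro mult_left_mono) auto
      also have "\<dots> = f v * (f u / a)" by simp
      finally have "f (u - h) / b \<le> f u / a"
        using pos(2) by (rule mult_left_le_imp_le)
      then show ?thesis using w_inside[of u] True that(1) v by simp
    qed (use w_left in simp)
  qed (rule that)
  then show ?thesis using that unfolding w_def by blast
qed

lemma cexp_atMost_add_le:
  assumes x: "0 < x" "x + h \<le> 1" and h: "0 < h"
  shows "cexp f {..x + h} \<le> cexp f {..x} + h"
proof -
  define Fx Fxh where "Fx = mass f {..x}" and "Fxh = mass f {..x + h}"
  have F: "0 < Fx" "0 < Fxh" using x h by (auto simp: Fx_def Fxh_def intro!: mass_atMost_pos)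
  \<comment> \<open>P and Q are the densities of \<open>\<theta>\<close> given \<open>\<theta> \<le> x + h\<close> and of \<open>\<theta> + h\<close> given \<open>\<theta> \<le> x\<close>.\<close>
  define P where "P = (\<lambda>u. indicator {0..x+h} u * f u / Fxh)"
  define Q where "Q = (\<lambda>u. indicator {h..x+h} u * f (u - h) / Fx)"
  have uP: "(\<lambda>u. u * P u) = (\<lambda>u. indicator {0..x+h} u * (u * f u) / Fxh)"
    by (simp add: P_def fun_eq_iff mult_ac)
  have uQ: "(\<lambda>u. u * Q u) = (\<lambda>u. u * (indicator {h..x+h} u * f (u - h)) / Fx)"
    by (simp add: Q_def fun_eq_iff)
  have x1: "x \<le> 1" using x h by simp
  have P_integrable: "integrable lborel P" "integrable lborel (\<lambda>u. u * P u)"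
    and P_integrals: "integral\<^sup>L lborel P = 1" "integral\<^sup>L lborel (\<lambda>u. u * P u) = cexp f {..x + h}"
    using x F unfolding uP unfolding P_def
    by (simp_all add: integrable_indicator_density integrable_indicator_moment
        integral_indicator_density integral_indicator_moment Fxh_def cexp_eq_moment_div_mass)
  have Q_integrable: "integrable lborel Q" "integrable lborel (\<lambda>u. u * Q u)"
    and Q_integrals: "integral\<^sup>L lborel Q = 1" "integral\<^sup>L lborel (\<lambda>u. u * Q u) = cexp f {..x} + h"
    using x1 F unfolding uQ unfolding Q_def
    by (simp_all add: integrable_shifted_density integrable_shifted_moment
        integral_shifted_density integral_shifted_moment Fx_def cexp_eq_moment_div_mass add_divide_distrib)
  obtain c where crossing: "\<And>u. (u - c) * (P u - Q u) \<le> 0"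
    using shifted_density_single_crossing[OF h x(2) F(2,1)] unfolding P_def Q_def by blast
  show ?thesis
    using integral_mean_le_of_single_crossing[OF P_integrable Q_integrable _ crossing]
      P_integrals Q_integrals by simp
qed

lemma cexp_atMost_le_add: "0 < x \<Longrightarrow> x \<le> y \<Longrightarrow> y \<le> 1 \<Longrightarrow> cexp f {..y} \<le> cexp f {..x} + (y - x)"
  using cexp_atMost_add_le[of x "y - x"] by (cases "x = y") auto

end

lemma sale_val_funded: "I \<le> p \<Longrightarrow> sale_val I S p = p + S"
  by (simp add: sale_val_def)

lemma sale_val_unfunded: "p < I \<Longrightarrow> sale_val I S p = p"
  by (simp add: sale_val_def)

lemma sale_val_le: "0 \<le> S \<Longrightarrow> sale_val I S p \<le> p + S"
  by (simp add: sale_val_def)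

lemma sale_val_eq_above: "sale_val I S q = z \<Longrightarrow> q < z \<Longrightarrow> I \<le> q \<and> q = z - S"
  by (auto simp: sale_val_def split: if_splits)

lemma ex_type_of_mass_pos:
  assumes "0 < mass f A"
  obtains th where "th \<in> {0..1}" "th \<in> A"
proof -
  have "A \<inter> {0..1} \<noteq> {}"
    using assms by (auto simp: mass_def set_lebesgue_integral_def)
  then show ?thesis using that by blast
qed

locale delayed_stimulation = log_concave_density f for f :: "real \<Rightarrow> real" +
  fixes I S pg th0 p0 :: real and s1 :: "real \<Rightarrow> act1" and s2 :: "real \<Rightarrow> act1 \<Rightarrow> bool"
    and p1 qg qn th_hat th_g th2 :: real
  assumes f_total: "set_lebesgue_integral lborel {0..1} f = 1"
    and S_pos: "0 < S"
    and th0: "0 < th0" "th0 < 1" "th0 - S = cexp f {..th0}"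
    and th0_unique: "\<forall>x\<in>{0<..<1}. x - S = cexp f {..x} \<longrightarrow> x = th0"
    and p0_def: "p0 = cexp f {..th0}"
    and p0_I: "I \<le> p0"
    and pg: "p0 < pg" "pg < 1 - S"
    and eq: "transparent_eq f I S pg s1 s2 p1 qg qn"
    and cut: "has_cutoffs s1 s2 th_hat th_g th2"
    and delayed: "th_g < th2"
begin

abbreviation V where "V \<equiv> sale_val I S"
abbreviation pay where "pay \<equiv> payoff I S pg p1 qg qn s1 s2"

lemma V_le: "V p \<le> p + S"
  using S_pos by (simp add: sale_val_le)

lemma p0_eq: "p0 = th0 - S"
  using p0_def th0(3) by simp

lemma eq_th0_of_fixed_point: "0 < x \<Longrightarrow> x < 1 \<Longrightarrow> cexp f {..x} = x - S \<Longrightarrow> x = th0"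
  using th0_unique by simp

lemma cexp_atMost_gt_shift:
  assumes "0 < x" "x < th0"
  shows "x - S < cexp f {..x}"
proof -
  have "cexp f {..th0} \<le> cexp f {..x} + (th0 - x)"
    using assms th0 by (intro cexp_atMost_le_add) auto
  moreover have "cexp f {..x} \<noteq> x - S"
    using eq_th0_of_fixed_point[of x] assms th0(2) by auto
  ultimately show ?thesis using th0(3) by simp
qed

lemma cexp_atMost_lt_shift:
  assumes "th0 < x" "x \<le> 1"
  shows "cexp f {..x} < x - S"
proof -
  define y where "y = (th0 + x) / 2"
  have y: "th0 < y" "y < x" "y < 1" using assms by (auto simp: y_def)
  have "cexp f {..y} \<le> cexp f {..th0} + (y - th0)"
    using y th0 by (intro cexp_atMost_le_add) auto
  moreover have "cexp f {..y} \<noteq> y - S"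
    using eq_th0_of_fixed_point[of y] y th0(1) by auto
  ultimately have "cexp f {..y} < y - S" using th0(3) by simp
  moreover have "cexp f {..x} \<le> cexp f {..y} + (x - y)"
    using y th0 assms by (intro cexp_atMost_le_add) auto
  ultimately show ?thesis by simp
qed

lemma mass_atMost_1: "mass f {..1} = 1"
proof -
  have "{..1} \<inter> {0..1} = {0..1::real}" by auto
  then show ?thesis using f_total by (simp add: mass_def)
qed

lemma strategy_measurable: "{th. s1 th = a} \<in> sets lborel" "{th. s2 th a} \<in> sets lborel"
  using eq unfolding transparent_eq_def by blast+

lemma
  assumes "th \<in> {0..1}"
  shows t2_sell_opt: "s2 th a \<Longrightarrow> th \<le> V (price2 qg qn a)"
    and t2_keep_opt: "\<not> s2 th a \<Longrightarrow> V (price2 qg qn a) \<le> th"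
  using eq assms unfolding transparent_eq_def by blast+

lemma t1_opt: "th \<in> {0..1} \<Longrightarrow> flow1 I S pg p1 a th + cont I S qg qn a th \<le> pay th"
  using eq unfolding transparent_eq_def by blast

lemma break_even_mkt1: "mass f {th. s1 th = Mkt} > 0 \<Longrightarrow> p1 = cexp f {th. s1 th = Mkt}"
  using eq unfolding transparent_eq_def by blast

lemma break_even_gov2:
  "mass f {th. s1 th = Gov \<and> s2 th Gov} > 0 \<Longrightarrow> qg = cexp f {th. s1 th = Gov \<and> s2 th Gov}"
  using eq unfolding transparent_eq_def by blast

lemma break_even_non2:
  "mass f {th. s1 th \<noteq> Gov \<and> s2 th (s1 th)} > 0 \<Longrightarrow> qn = cexp f {th. s1 th \<noteq> Gov \<and> s2 th (s1 th)}"
  using eq unfolding transparent_eq_def by blast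

lemma no_overbid_mkt1: "p' > p1 \<Longrightarrow> set_lebesgue_integral lborel
    ({th. V p' + cont I S qg qn Mkt th > pay th} \<inter> {0..1}) (\<lambda>x. (x - p') * f x) \<le> 0"
  using eq unfolding transparent_eq_def by blast

lemma no_overbid_gov2: "p' > qg \<Longrightarrow> set_lebesgue_integral lborel
    ({th. s1 th = Gov \<and> V p' > th} \<inter> {0..1}) (\<lambda>x. (x - p') * f x) \<le> 0"
  using eq unfolding transparent_eq_def by blast

lemma V_pg: "V pg = pg + S"
  using pg p0_I by (simp add: sale_val_funded)

lemma
  assumes "th \<in> {0..1}"
  shows deviation_gov: "pg + S + max th (V qg) \<le> pay th"
    and deviation_mkt: "V p1 + max th (V qn) \<le> pay th"
    and deviation_nosale: "th + max th (V qn) \<le> pay th"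
  using t1_opt[OF assms, of Gov] t1_opt[OF assms, of Mkt] t1_opt[OF assms, of NoSale]
  by (simp_all add: flow1_def cont_def price2_def V_pg)

lemma payoff_gov_sell: "s1 th = Gov \<Longrightarrow> s2 th Gov \<Longrightarrow> pay th = pg + S + V qg"
  and payoff_gov_keep: "s1 th = Gov \<Longrightarrow> \<not> s2 th Gov \<Longrightarrow> pay th = pg + S + th"
  and payoff_mkt_sell: "s1 th = Mkt \<Longrightarrow> s2 th Mkt \<Longrightarrow> pay th = V p1 + V qn"
  by (simp_all add: payoff_def flow1_def price2_def V_pg)

lemma payoff_nosale: "th \<in> {0..1} \<Longrightarrow> s1 th = NoSale \<Longrightarrow> pay th = th + max th (V qn)"
  using t2_sell_opt[of th NoSale] t2_keep_opt[of th NoSale]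
  by (cases "s2 th NoSale") (auto simp: payoff_def flow1_def price2_def)

lemma cutoffs: "0 < th_hat" "th_hat \<le> th_g" "th_g \<le> th2"
  using cut by (auto simp: has_cutoffs_def)

lemma
  assumes "th \<in> {0..1}"
  shows low_type: "th \<le> th_hat \<Longrightarrow> s1 th \<noteq> NoSale \<and> s2 th (s1 th)"
    and bailout_type: "th_hat < th \<Longrightarrow> th \<le> th_g \<Longrightarrow> s1 th = Gov \<and> \<not> s2 th Gov"
    and late_type: "th_g < th \<Longrightarrow> th \<le> th2 \<Longrightarrow> s1 th = NoSale \<and> s2 th NoSale"
    and inactive_type: "th2 < th \<Longrightarrow> s1 th = NoSale \<and> \<not> s2 th NoSale"
  using cut assms unfolding has_cutoffs_def sells1_def sells2_def by auto

lemma low_type_gov_or_mkt: "th \<in> {0..1} \<Longrightarrow> th \<le> th_hat \<Longrightarrow> s1 th = Gov \<or> s1 th = Mkt"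
  using low_type by (cases "s1 th") auto

lemma nosale_above_bailout: "th \<in> {0..1} \<Longrightarrow> th_g < th \<Longrightarrow> s1 th = NoSale"
  using late_type inactive_type by (cases "th \<le> th2") auto

lemma cexp_atMost_1: "cexp f {..1} < 1 - S"
  using cexp_atMost_lt_shift[of 1] th0 by simp

lemma not_all_sell_at_pooled_price:
  assumes "B \<in> sets lborel" "mass f B = 0" "q = cexp f {..1}"
    and "\<And>th. 0 \<le> th \<Longrightarrow> th < 1 \<Longrightarrow> th \<notin> B \<Longrightarrow> th \<le> V q"
  shows False
proof -
  have "1 \<le> V q" using le_of_bound_off_null_set[of 1 B "V q"] assms by simp
  then show False using V_le[of q] cexp_atMost_1 assms(3) by simp
qed

context
  assumes all_sell_twice: "\<forall>th\<in>{0..1}. s1 th \<noteq> NoSale \<and> s2 th (s1 th)"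
begin

lemma full_pooling_gov_or_mkt: "th \<in> {0..1} \<Longrightarrow> s1 th = Gov \<or> s1 th = Mkt"
  using all_sell_twice by (cases "s1 th") auto

lemma
  shows full_pooling_cover: "({th. s1 th = Mkt} \<union> {th. s1 th = Gov}) \<inter> {0..1} = {..1} \<inter> {0..1}"
    and full_pooling_gov_sellers:
      "{th. s1 th = Gov \<and> s2 th Gov} \<inter> {0..1} = {th. s1 th = Gov} \<inter> {0..1}"
    and full_pooling_non_recipient_sellers:
      "{th. s1 th \<noteq> Gov \<and> s2 th (s1 th)} \<inter> {0..1} = {th. s1 th = Mkt} \<inter> {0..1}"
  using all_sell_twice full_pooling_gov_or_mkt by fastforce+

lemma
  shows full_pooling_mass: "mass f {th. s1 th = Mkt} + mass f {th. s1 th = Gov} = 1"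
    and full_pooling_cexp: "cexp f {..1} =
      mass f {th. s1 th = Mkt} * cexp f {th. s1 th = Mkt} + mass f {th. s1 th = Gov} * cexp f {th. s1 th = Gov}"
proof -
  have disj: "{th. s1 th = Mkt} \<inter> {th. s1 th = Gov} = {}" by auto
  note split = mass_Un[OF strategy_measurable(1,1) disj] moment_Un[OF strategy_measurable(1,1) disj]
  show "mass f {th. s1 th = Mkt} + mass f {th. s1 th = Gov} = 1"
    using split mass_cong[OF full_pooling_cover] mass_atMost_1 by simp
  have "cexp f {..1} = moment f {..1}"
    using mass_atMost_1 by (simp add: cexp_eq_moment_div_mass)
  also have "\<dots> = moment f {th. s1 th = Mkt} + moment f {th. s1 th = Gov}"
    using split moment_cong[OF full_pooling_cover] by simp
  finally show "cexp f {..1} =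
      mass f {th. s1 th = Mkt} * cexp f {th. s1 th = Mkt} + mass f {th. s1 th = Gov} * cexp f {th. s1 th = Gov}"
    using moment_eq_mass_cexp strategy_measurable by simp
qed

lemma full_pooling_mkt_route_pos: "0 < mass f {th. s1 th = Mkt}"
proof (rule ccontr)
  assume "\<not> 0 < mass f {th. s1 th = Mkt}"
  then have null: "mass f {th. s1 th = Mkt} = 0" using mass_nonneg[OF strategy_measurable(1)[of Mkt]] by simp
  then have "qg = cexp f {th. s1 th = Gov}"
    using break_even_gov2 full_pooling_mass mass_cong[OF full_pooling_gov_sellers]
      cexp_cong[OF full_pooling_gov_sellers] by simp
  also have "\<dots> = cexp f {..1}"
    using full_pooling_cexp full_pooling_mass null by simp
  finally show False
  proof (rule not_all_sell_at_pooled_price[OF strategy_measurable(1) null])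
    fix th assume "0 \<le> th" "th < 1" "th \<notin> {th. s1 th = Mkt}"
    then show "th \<le> V qg"
      using all_sell_twice[rule_format, of th] full_pooling_gov_or_mkt[of th] t2_sell_opt[of th Gov] by (auto simp: price2_def)
  qed
qed

lemma full_pooling_gov_route_pos: "0 < mass f {th. s1 th = Gov}"
proof (rule ccontr)
  assume "\<not> 0 < mass f {th. s1 th = Gov}"
  then have null: "mass f {th. s1 th = Gov} = 0" using mass_nonneg[OF strategy_measurable(1)[of Gov]] by simp
  then have "qn = cexp f {th. s1 th = Mkt}"
    using break_even_non2 full_pooling_mass mass_cong[OF full_pooling_non_recipient_sellers]
      cexp_cong[OF full_pooling_non_recipient_sellers] by simp
  also have "\<dots> = cexp f {..1}"
    using full_pooling_cexp full_pooling_mass null by simp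
  finally show False
  proof (rule not_all_sell_at_pooled_price[OF strategy_measurable(1) null])
    fix th assume "0 \<le> th" "th < 1" "th \<notin> {th. s1 th = Gov}"
    then show "th \<le> V qn"
      using all_sell_twice[rule_format, of th] full_pooling_gov_or_mkt[of th] t2_sell_opt[of th Mkt] by (auto simp: price2_def)
  qed
qed

lemma not_all_sell_twice: False
proof -
  note pos = full_pooling_mkt_route_pos full_pooling_gov_route_pos
  have prices: "p1 = cexp f {th. s1 th = Mkt}" "qn = cexp f {th. s1 th = Mkt}" "qg = cexp f {th. s1 th = Gov}"
    using pos break_even_mkt1 break_even_non2 break_even_gov2
      mass_cong[OF full_pooling_non_recipient_sellers] cexp_cong[OF full_pooling_non_recipient_sellers]
      mass_cong[OF full_pooling_gov_sellers] cexp_cong[OF full_pooling_gov_sellers]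
    by simp_all
  obtain tg where tg: "tg \<in> {0..1}" "s1 tg = Gov" using ex_type_of_mass_pos[OF pos(2)] by auto
  obtain tm where tm: "tm \<in> {0..1}" "s1 tm = Mkt" using ex_type_of_mass_pos[OF pos(1)] by auto
  \<comment> \<open>Both routes are taken, so they yield the same payoff; the top type must get at least 2.\<close>
  have "V p1 + V qn \<le> pg + S + V qg"
    using deviation_mkt[OF tg(1)] payoff_gov_sell[OF tg(2)] all_sell_twice[rule_format, OF tg(1)] tg(2)
    by simp
  moreover have "pg + S + V qg \<le> V p1 + V qn"
    using deviation_gov[OF tm(1)] payoff_mkt_sell[OF tm(2)] all_sell_twice[rule_format, OF tm(1)] tm(2)
    by simp
  moreover have "pay 1 = V p1 + V qn \<or> pay 1 = pg + S + V qg"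
    using full_pooling_gov_or_mkt[of 1] all_sell_twice[rule_format, of 1] payoff_gov_sell payoff_mkt_sell
    by auto
  moreover have "2 \<le> pay 1"
    using deviation_nosale[of 1] by simp
  ultimately have "2 \<le> V p1 + V qn" "2 \<le> pg + S + V qg" by auto
  then have "1 - S \<le> cexp f {th. s1 th = Mkt}" "1 - S < cexp f {th. s1 th = Gov}"
    using V_le[of p1] V_le[of qn] V_le[of qg] prices pg by auto
  then have "(1 - S) * (mass f {th. s1 th = Mkt} + mass f {th. s1 th = Gov}) < cexp f {..1}"
    unfolding full_pooling_cexp using pos
    by (simp add: distrib_left mult.commute add_le_less_mono mult_left_mono mult_strict_left_mono)
  then show False using cexp_atMost_1 full_pooling_mass by simp
qed

end

lemma bailout_cutoff_lt_1: "th_g < 1"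
proof (rule ccontr)
  assume "\<not> th_g < 1"
  show False
  proof (cases "th_hat < 1")
    case True
    then have "pay 1 = pg + S + 1"
      using bailout_type[of 1] payoff_gov_keep \<open>\<not> th_g < 1\<close> by simp
    then show False using deviation_nosale[of 1] pg by (simp add: max_def split: if_splits)
  next
    case False
    then show False
      using not_all_sell_twice low_type by auto
  qed
qed

lemma bailout_cutoff_lt_late: "th_g < min th2 1"
  using bailout_cutoff_lt_1 delayed by simp

lemma late_type_incentives:
  assumes "th_g < th" "th \<le> min th2 1"
  shows "th \<le> V qn" "pg + S + max th (V qg) \<le> th + V qn" "V p1 \<le> th"
proof -
  have th: "th \<in> {0..1}" using assms cutoffs by auto
  have late: "s1 th = NoSale" "s2 th NoSale" using late_type[OF th] assms by auto
  show sells: "th \<le> V qn" using t2_sell_opt[OF th late(2)] by (simp add: price2_def)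
  have "pay th = th + V qn" using payoff_nosale[OF th late(1)] sells by simp
  then show "pg + S + max th (V qg) \<le> th + V qn" "V p1 \<le> th"
    using deviation_gov[OF th] deviation_mkt[OF th] sells by auto
qed

lemma late_cutoff_le_V_qn: "min th2 1 \<le> V qn"
  using late_type_incentives(1)[of "min th2 1"] bailout_cutoff_lt_late by simp

lemma bailout_cutoff_lt_V_qn: "th_g < V qn"
  using late_cutoff_le_V_qn bailout_cutoff_lt_late by linarith

lemma
  shows V_qn: "V qn = qn + S" and pg_le_qn: "pg \<le> qn"
proof -
  have "pg + S + max (min th2 1) (V qg) \<le> min th2 1 + V qn"
    using late_type_incentives(2)[of "min th2 1"] bailout_cutoff_lt_late by simp
  then have gov_route: "pg + S \<le> V qn" by (simp add: max_def split: if_splits)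
  have "I \<le> qn"
  proof (rule ccontr)
    assume "\<not> I \<le> qn"
    then show False using gov_route sale_val_unfunded[of qn I S] p0_I pg S_pos by simp
  qed
  then show "V qn = qn + S" by (simp add: sale_val_funded)
  then show "pg \<le> qn" using gov_route by simp
qed

lemma V_p1_le_bailout_cutoff: "V p1 \<le> th_g"
  using bailout_cutoff_lt_late
  by (rule dense_ge_bounded) (use late_type_incentives(3) in auto)

lemma gov_route_le_bailout_route: "pg + S + V qg \<le> th_g + V qn"
proof -
  have "pg + S + V qg - V qn \<le> th_g"
    using bailout_cutoff_lt_late
  proof (rule dense_ge_bounded)
    fix th assume "th_g < th" "th < min th2 1"
    then show "pg + S + V qg - V qn \<le> th"
      using late_type_incentives(2)[of th] by (simp add: max_def split: if_splits)
  qed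
  then show ?thesis by simp
qed

lemma V_qn_eq_late_cutoff: "th2 < 1 \<Longrightarrow> V qn = th2"
proof -
  assume "th2 < 1"
  then have "V qn \<le> th2"
  proof (rule dense_ge_bounded)
    fix th assume th: "th2 < th" "th < 1"
    then have "th \<in> {0..1}" using cutoffs by auto
    then show "V qn \<le> th"
      using t2_keep_opt[of th NoSale] inactive_type th by (simp add: price2_def)
  qed
  then show ?thesis using late_cutoff_le_V_qn \<open>th2 < 1\<close> by simp
qed

definition low_gov where "low_gov = {th. th \<le> th_hat \<and> s1 th = Gov}"
definition low_mkt where "low_mkt = {th. th \<le> th_hat \<and> s1 th = Mkt}"

lemma low_gov_measurable: "low_gov \<in> sets lborel"
  and low_mkt_measurable: "low_mkt \<in> sets lborel"
proof -
  have "low_gov = {..th_hat} \<inter> {th. s1 th = Gov}" "low_mkt = {..th_hat} \<inter> {th. s1 th = Mkt}"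
    by (auto simp: low_gov_def low_mkt_def)
  then show "low_gov \<in> sets lborel" "low_mkt \<in> sets lborel"
    using strategy_measurable by auto
qed

lemma low_gov_mkt_disjoint: "low_gov \<inter> low_mkt = {}"
  by (auto simp: low_gov_def low_mkt_def)

lemma low_type_max_V_qn: "th \<le> th_hat \<Longrightarrow> max th (V qn) = V qn"
  using bailout_cutoff_lt_V_qn cutoffs by simp

lemma low_gov_incentives:
  assumes th: "th \<in> {0..1}" "th \<le> th_hat" "s1 th = Gov"
  shows "th \<le> V qg" "V p1 + V qn \<le> pg + S + V qg" "th + V qn \<le> pg + S + V qg"
    and "pay th = pg + S + V qg"
proof -
  have sells: "s2 th Gov" using low_type[OF th(1,2)] th(3) by simp
  show "th \<le> V qg" using t2_sell_opt[OF th(1) sells] by (simp add: price2_def)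
  show "pay th = pg + S + V qg" by (rule payoff_gov_sell[OF th(3) sells])
  then show "V p1 + V qn \<le> pg + S + V qg" "th + V qn \<le> pg + S + V qg"
    using deviation_mkt[OF th(1)] deviation_nosale[OF th(1)] low_type_max_V_qn[OF th(2)] by simp_all
qed

lemma low_mkt_incentives:
  assumes th: "th \<in> {0..1}" "th \<le> th_hat" "s1 th = Mkt"
  shows "th \<le> V p1" "pg + S + max th (V qg) \<le> V p1 + V qn" "pay th = V p1 + V qn"
proof -
  have sells: "s2 th Mkt" using low_type[OF th(1,2)] th(3) by simp
  show pay: "pay th = V p1 + V qn" by (rule payoff_mkt_sell[OF th(3) sells])
  show "th \<le> V p1" using deviation_nosale[OF th(1)] pay low_type_max_V_qn[OF th(2)] by simp
  show "pg + S + max th (V qg) \<le> V p1 + V qn" using deviation_gov[OF th(1)] pay by simp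
qed

lemma bailout_type_incentives:
  assumes "th_hat < th" "th \<le> th_g"
  shows "V qg \<le> th" "V qn \<le> pg + S" "V p1 + V qn \<le> pg + S + th"
proof -
  have th: "th \<in> {0..1}" using assms cutoffs bailout_cutoff_lt_1 by auto
  have gov: "s1 th = Gov" "\<not> s2 th Gov" using bailout_type[OF th] assms by auto
  show "V qg \<le> th" using t2_keep_opt[OF th gov(2)] by (simp add: price2_def)
  have "pay th = pg + S + th" by (rule payoff_gov_keep[OF gov])
  moreover have "max th (V qn) = V qn" using bailout_cutoff_lt_V_qn assms by simp
  ultimately show "V qn \<le> pg + S" "V p1 + V qn \<le> pg + S + th"
    using deviation_nosale[OF th] deviation_mkt[OF th] by simp_all
qed

lemma mkt1_sellers: "{th. s1 th = Mkt} \<inter> {0..1} = low_mkt \<inter> {0..1}"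
proof -
  have "th \<le> th_hat" if "th \<in> {0..1}" "s1 th = Mkt" for th
    using that bailout_type[OF that(1)] nosale_above_bailout[OF that(1)] by force
  then show ?thesis by (auto simp: low_mkt_def)
qed

lemma gov2_sellers: "{th. s1 th = Gov \<and> s2 th Gov} \<inter> {0..1} = low_gov \<inter> {0..1}"
proof -
  have "th \<le> th_hat" if "th \<in> {0..1}" "s1 th = Gov" "s2 th Gov" for th
    using that bailout_type[OF that(1)] nosale_above_bailout[OF that(1)] by force
  moreover have "s2 th Gov" if "th \<in> {0..1}" "th \<le> th_hat" "s1 th = Gov" for th
    using low_type[OF that(1,2)] that(3) by simp
  ultimately show ?thesis by (auto simp: low_gov_def)
qed

lemma non_recipient_sellers:
  "{th. s1 th \<noteq> Gov \<and> s2 th (s1 th)} \<inter> {0..1} = (low_mkt \<union> {th_g<..min th2 1}) \<inter> {0..1}"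
proof (intro set_eqI iffI)
  fix th
  assume th: "th \<in> {th. s1 th \<noteq> Gov \<and> s2 th (s1 th)} \<inter> {0..1}"
  then have "th \<le> th_hat \<or> th_g < th \<and> th \<le> th2"
    using bailout_type[of th] inactive_type[of th] by force
  then show "th \<in> (low_mkt \<union> {th_g<..min th2 1}) \<inter> {0..1}"
    using th low_type_gov_or_mkt[of th] by (auto simp: low_mkt_def)
next
  fix th
  assume th: "th \<in> (low_mkt \<union> {th_g<..min th2 1}) \<inter> {0..1}"
  then show "th \<in> {th. s1 th \<noteq> Gov \<and> s2 th (s1 th)} \<inter> {0..1}"
    using low_type[of th] late_type[of th] cutoffs by (auto simp: low_mkt_def)
qed

lemma qn_eq_cexp_non_recipients: "qn = cexp f (low_mkt \<union> {th_g<..min th2 1})"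
proof -
  have "0 < mass f (low_mkt \<union> {th_g<..min th2 1})"
    using bailout_cutoff_lt_late cutoffs low_mkt_measurable
    by (intro mass_pos_of_interval[of th_g "min th2 1"]) auto
  then show ?thesis
    using break_even_non2 mass_cong[OF non_recipient_sellers] cexp_cong[OF non_recipient_sellers]
    by simp
qed

lemma low_types_split: "{..th_hat} \<inter> {0..1} = (low_gov \<union> low_mkt) \<inter> {0..1}"
proof -
  have "th \<in> low_gov \<union> low_mkt" if "th \<in> {0..1}" "th \<le> th_hat" for th
    using low_type_gov_or_mkt[OF that] that by (auto simp: low_gov_def low_mkt_def)
  moreover have "low_gov \<union> low_mkt \<subseteq> {..th_hat}" by (auto simp: low_gov_def low_mkt_def)
  ultimately show ?thesis by fastforce
qed

lemma th_hat_lt_1: "th_hat < 1"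
  using cutoffs bailout_cutoff_lt_1 by simp

lemma mass_low_types_pos: "0 < mass f {..th_hat}"
  using mass_atMost_pos cutoffs th_hat_lt_1 by simp

lemma
  shows mass_low_types: "mass f {..th_hat} = mass f low_gov + mass f low_mkt"
    and moment_low_types: "moment f {..th_hat} = moment f low_gov + moment f low_mkt"
  using mass_cong[OF low_types_split] moment_cong[OF low_types_split]
    mass_Un[OF low_gov_measurable low_mkt_measurable low_gov_mkt_disjoint]
    moment_Un[OF low_gov_measurable low_mkt_measurable low_gov_mkt_disjoint]
  by auto

lemma p1_eq_cexp_low_mkt: "0 < mass f low_mkt \<Longrightarrow> p1 = cexp f low_mkt"
  using break_even_mkt1 mass_cong[OF mkt1_sellers] cexp_cong[OF mkt1_sellers] by simp

lemma qg_eq_cexp_low_gov: "0 < mass f low_gov \<Longrightarrow> qg = cexp f low_gov"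
  using break_even_gov2 mass_cong[OF gov2_sellers] cexp_cong[OF gov2_sellers] by simp

lemma cexp_low_gov_lt: "0 < mass f low_gov \<Longrightarrow> cexp f low_gov < th_hat"
  by (rule cexp_less_of_le[OF low_gov_measurable]) (auto simp: low_gov_def)

lemma cexp_low_mkt_lt: "0 < mass f low_mkt \<Longrightarrow> cexp f low_mkt < th_hat"
  by (rule cexp_less_of_le[OF low_mkt_measurable]) (auto simp: low_mkt_def)

lemma cexp_low_types_lt: "cexp f {..th_hat} < th_hat"
  by (rule cexp_less_of_le[OF _ mass_low_types_pos]) auto

lemma
  assumes "mass f low_gov = 0"
  shows cexp_low_mkt_of_low_gov_null: "cexp f low_mkt = cexp f {..th_hat}"
    and mass_low_mkt_of_low_gov_null: "mass f low_mkt = mass f {..th_hat}"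
proof -
  have "mass f ((low_gov \<union> low_mkt) - low_mkt) = 0"
    using assms low_gov_mkt_disjoint by (simp add: Un_Diff Diff_triv)
  then show "cexp f low_mkt = cexp f {..th_hat}" "mass f low_mkt = mass f {..th_hat}"
    using cexp_null_diff[of low_mkt "low_gov \<union> low_mkt"] mass_null_diff[of low_mkt "low_gov \<union> low_mkt"]
      low_gov_measurable low_mkt_measurable cexp_cong[OF low_types_split] mass_cong[OF low_types_split]
    by auto
qed

lemma cexp_low_gov_of_low_mkt_null: "mass f low_mkt = 0 \<Longrightarrow> cexp f low_gov = cexp f {..th_hat}"
proof -
  assume "mass f low_mkt = 0"
  moreover have "(low_gov \<union> low_mkt) - low_gov = low_mkt"
    using low_gov_mkt_disjoint by blast
  ultimately have "mass f ((low_gov \<union> low_mkt) - low_gov) = 0" by simp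
  then show ?thesis
    using cexp_null_diff[of low_gov "low_gov \<union> low_mkt"] low_gov_measurable low_mkt_measurable
      cexp_cong[OF low_types_split]
    by auto
qed

lemma cexp_low_types_of_common_value:
  assumes "cexp f low_gov = v" "cexp f low_mkt = v"
  shows "cexp f {..th_hat} = v"
proof -
  have "moment f {..th_hat} = mass f {..th_hat} * v"
    using moment_low_types mass_low_types assms
      moment_eq_mass_cexp[OF low_gov_measurable] moment_eq_mass_cexp[OF low_mkt_measurable]
    by (simp add: algebra_simps)
  then show ?thesis
    using mass_low_types_pos by (simp add: cexp_eq_moment_div_mass)
qed

lemma th_hat_eq_th0_of_fixed_point: "cexp f {..th_hat} = th_hat - S \<Longrightarrow> th_hat = th0"
  using eq_th0_of_fixed_point cutoffs th_hat_lt_1 by simp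

lemma th_hat_le_V_p1_of_low_gov_null: "mass f low_gov = 0 \<Longrightarrow> th_hat \<le> V p1"
proof (rule le_of_bound_off_null_set[OF _ _ low_gov_measurable])
  fix th assume th: "0 \<le> th" "th < th_hat" "th \<notin> low_gov"
  then have "th \<in> {0..1}" "th \<le> th_hat" "s1 th = Mkt"
    using th_hat_lt_1 low_type_gov_or_mkt[of th] by (auto simp: low_gov_def)
  then show "th \<le> V p1" using low_mkt_incentives(1) by blast
qed (use cutoffs th_hat_lt_1 in auto)

lemma th_hat_le_V_qg_of_low_mkt_null: "mass f low_mkt = 0 \<Longrightarrow> th_hat \<le> V qg"
proof (rule le_of_bound_off_null_set[OF _ _ low_mkt_measurable])
  fix th assume th: "0 \<le> th" "th < th_hat" "th \<notin> low_mkt"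
  then have "th \<in> {0..1}" "th \<le> th_hat" "s1 th = Gov"
    using th_hat_lt_1 low_type_gov_or_mkt[of th] by (auto simp: low_mkt_def)
  then show "th \<le> V qg" using low_gov_incentives(1) by blast
qed (use cutoffs th_hat_lt_1 in auto)

lemma th_hat_eq_th0_of_low_gov_null:
  assumes "mass f low_gov = 0" "V p1 \<le> th_hat"
  shows "th_hat = th0"
proof -
  have "0 < mass f low_mkt"
    using mass_low_mkt_of_low_gov_null[OF assms(1)] mass_low_types_pos by simp
  then have "p1 = cexp f {..th_hat}"
    using p1_eq_cexp_low_mkt cexp_low_mkt_of_low_gov_null[OF assms(1)] by simp
  moreover have "V p1 = th_hat"
    using th_hat_le_V_p1_of_low_gov_null[OF assms(1)] assms(2) by simp
  ultimately have "p1 = th_hat - S"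
    using sale_val_eq_above[of I S p1 th_hat] cexp_low_types_lt by simp
  then show ?thesis
    using th_hat_eq_th0_of_fixed_point \<open>p1 = cexp f {..th_hat}\<close> by simp
qed

lemma low_prices_of_low_values:
  assumes gov: "0 < mass f low_gov" and V_qg: "V qg = th_hat"
    and V_p1: "0 < mass f low_mkt \<Longrightarrow> V p1 = th_hat"
  shows "th_hat = th0 \<and> qg = p0 \<and> cexp f low_gov = p0 \<and>
    (0 < mass f low_mkt \<longrightarrow> p1 = p0 \<and> cexp f low_mkt = p0)"
proof -
  have qg: "qg = cexp f low_gov" "qg = th_hat - S"
    using qg_eq_cexp_low_gov[OF gov] sale_val_eq_above[OF V_qg] cexp_low_gov_lt[OF gov] by auto
  have "cexp f {..th_hat} = th_hat - S"
  proof (cases "mass f low_mkt = 0")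
    case True
    then show ?thesis using cexp_low_gov_of_low_mkt_null qg by simp
  next
    case False
    then have mkt: "0 < mass f low_mkt" using mass_nonneg[OF low_mkt_measurable] by simp
    then have "p1 = cexp f low_mkt" "p1 = th_hat - S"
      using p1_eq_cexp_low_mkt sale_val_eq_above[OF V_p1] cexp_low_mkt_lt by auto
    then show ?thesis using cexp_low_types_of_common_value qg by simp
  qed
  then have "th_hat = th0" by (rule th_hat_eq_th0_of_fixed_point)
  moreover have "0 < mass f low_mkt \<Longrightarrow> p1 = p0 \<and> cexp f low_mkt = p0"
    using V_p1 p1_eq_cexp_low_mkt sale_val_eq_above[of I S p1 th_hat] cexp_low_mkt_lt
      \<open>th_hat = th0\<close> p0_eq by force
  ultimately show ?thesis using qg p0_eq by simp
qed

lemma lt_th0_of_cexp_gt_shift: "0 < x \<Longrightarrow> x \<le> 1 \<Longrightarrow> x - S < cexp f {..x} \<Longrightarrow> x < th0"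
  using cexp_atMost_lt_shift[of x] th0(3) by (cases x th0 rule: linorder_cases) auto

context
  assumes separated: "th_hat < th_g"
begin

lemma separated_bounds: "V qn = pg + S" "V qg \<le> th_hat" "V p1 \<le> th_hat"
proof -
  show V_qn_pg: "V qn = pg + S"
    using bailout_type_incentives(2)[of th_g] separated V_qn pg_le_qn by simp
  show "V qg \<le> th_hat"
    using separated by (rule dense_ge_bounded) (use bailout_type_incentives(1) in auto)
  show "V p1 \<le> th_hat"
    using separated by (rule dense_ge_bounded) (use bailout_type_incentives(3) V_qn_pg in auto)
qed

lemma separated_gov2_overbid_attracts:
  assumes "th_hat < z" "z \<le> th_g"
  shows "{th. s1 th = Gov \<and> z > th} \<inter> {0..1} = (low_gov \<inter> {..<z} \<union> {th_hat<..<z}) \<inter> {0..1}"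
proof (rule set_eqI)
  fix th
  show "th \<in> {th. s1 th = Gov \<and> z > th} \<inter> {0..1} \<longleftrightarrow> th \<in> (low_gov \<inter> {..<z} \<union> {th_hat<..<z}) \<inter> {0..1}"
  proof (cases "th \<in> {0..1}")
    case th: True
    consider "th \<le> th_hat" | "th_hat < th" "th \<le> th_g" | "th_g < th" by linarith
    then show ?thesis
    proof cases
      case 1
      then show ?thesis using th assms by (auto simp: low_gov_def)
    next
      case 2
      then show ?thesis using th assms bailout_type[OF th 2] by (auto simp: low_gov_def)
    next
      case 3
      then show ?thesis using th assms nosale_above_bailout[OF th 3] by (auto simp: low_gov_def)
    qed
  qed auto
qed

lemma separated_gov2_overbid_profitable:
  assumes null: "mass f low_gov = 0" and th_hat: "th_hat = th0"
  shows False
proof -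
  define z where "z = th_hat + min S (th_g - th_hat) / 2"
  have z: "th_hat < z" "z < th_g" "z < th_hat + S"
    using separated S_pos by (auto simp: z_def min_def field_simps)
  define p' where "p' = z - S"
  have funded: "I \<le> p'" using p0_I p0_eq th_hat z by (simp add: p'_def)
  then have V_p': "V p' = z" by (simp add: p'_def sale_val_funded)
  have qg_low: "qg < p'"
    using separated_bounds(2) funded z sale_val_funded[of I qg S] sale_val_unfunded[of qg I S]
    by (cases "I \<le> qg") (auto simp: p'_def)
  \<comment> \<open>Up to the null set \<open>low_gov\<close>, the bid \<open>p'\<close> attracts exactly the types in \<open>(th_hat, z)\<close>.\<close>
  define A where "A = {th_hat<..<z}"
  define B where "B = low_gov \<inter> {..<z} \<union> A"
  have meas: "A \<in> sets lborel" "B \<in> sets lborel" using low_gov_measurable by (auto simp: A_def B_def)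
  have "mass f (B - A) \<le> mass f low_gov"
    using low_gov_measurable meas by (intro mass_mono) (auto simp: B_def)
  then have "mass f (B - A) = 0" using null mass_nonneg[of "B - A"] meas by auto
  then have AB: "mass f A = mass f B" "moment f A = moment f B"
    using mass_null_diff[OF meas] moment_null_diff[OF meas] by (auto simp: B_def)
  have A_pos: "0 < mass f A"
    using cutoffs z bailout_cutoff_lt_1 by (intro mass_pos_of_interval[of th_hat z]) (auto simp: A_def)
  have "th_hat < cexp f A" by (rule cexp_greater_of_ge[OF meas(1) A_pos]) (auto simp: A_def)
  then have "0 < mass f A * (cexp f A - p')" using A_pos z by (simp add: p'_def)
  also have "\<dots> = moment f B - p' * mass f B"
    using AB moment_eq_mass_cexp[OF meas(1)] by (simp add: algebra_simps)
  also have "\<dots> = set_lebesgue_integral lborel (B \<inter> {0..1}) (\<lambda>t. (t - p') * f t)"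
    by (rule set_integral_excess[symmetric, OF meas(2)])
  also have "\<dots> \<le> 0"
    using no_overbid_gov2[OF qg_low] separated_gov2_overbid_attracts[of z] z V_p'
    by (simp add: A_def B_def)
  finally show False by simp
qed

lemma separated_low_gov_pos: "0 < mass f low_gov"
proof (rule ccontr)
  assume "\<not> 0 < mass f low_gov"
  then have null: "mass f low_gov = 0" using mass_nonneg[OF low_gov_measurable] by simp
  then have "th_hat = th0"
    using th_hat_eq_th0_of_low_gov_null separated_bounds(3) by simp
  then show False using separated_gov2_overbid_profitable[OF null] by simp
qed

lemma separated_low_values: "V qg = th_hat" "0 < mass f low_mkt \<Longrightarrow> V p1 = th_hat"
proof -
  note bounds = separated_bounds
  obtain tg where tg: "tg \<in> {0..1}" "tg \<le> th_hat" "s1 tg = Gov"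
    using ex_type_of_mass_pos[OF separated_low_gov_pos] by (auto simp: low_gov_def)
  have gov_route: "V p1 + V qn \<le> pg + S + V qg" by (rule low_gov_incentives(2)[OF tg])
  have th_hat: "th_hat \<in> {0..1}" using cutoffs th_hat_lt_1 by auto
  show V_qg: "V qg = th_hat"
  proof (rule ccontr)
    assume "V qg \<noteq> th_hat"
    then have "V qg < th_hat" using bounds by simp
    then have "s1 th_hat = Mkt"
      using low_type_gov_or_mkt[OF th_hat] low_gov_incentives(1)[OF th_hat] by force
    then have "th_hat \<le> V p1" using low_mkt_incentives(1)[OF th_hat] by simp
    then show False using gov_route bounds \<open>V qg < th_hat\<close> by simp
  qed
  assume mkt: "0 < mass f low_mkt"
  obtain tm where tm: "tm \<in> {0..1}" "tm \<le> th_hat" "s1 tm = Mkt"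
    using ex_type_of_mass_pos[OF mkt] by (auto simp: low_mkt_def)
  have "pg + S + max tm (V qg) \<le> V p1 + V qn" by (rule low_mkt_incentives(2)[OF tm])
  then show "V p1 = th_hat" using V_qg bounds by (simp add: max_def split: if_splits)
qed

end

context
  assumes pooled: "th_hat = th_g"
begin

lemma pooled_low_payoff:
  assumes same_route: "pg + S + V qg = th_hat + V qn" and th: "th \<in> {0..1}" "th \<le> th_hat"
  shows "pay th = th_hat + V qn"
proof (cases "s1 th = Gov")
  case True
  then show ?thesis using low_gov_incentives(4)[OF th True] same_route by simp
next
  case False
  then have mkt: "s1 th = Mkt" using low_type_gov_or_mkt[OF th] by simp
  then have "th_hat + V qn \<le> V p1 + V qn"
    using low_mkt_incentives(2)[OF th mkt] same_route by (simp add: max_def split: if_splits)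
  then show ?thesis
    using low_mkt_incentives(3)[OF th mkt] V_p1_le_bailout_cutoff pooled by simp
qed

lemma pooled_mkt1_overbid_attracts:
  assumes same_route: "pg + S + V qg = th_hat + V qn" and x: "th_hat < x"
  shows "{th. x + cont I S qg qn Mkt th > pay th} \<inter> {0..1} = {..<x} \<inter> {0..1}"
proof (rule set_eqI)
  fix th
  show "th \<in> {th. x + cont I S qg qn Mkt th > pay th} \<inter> {0..1} \<longleftrightarrow> th \<in> {..<x} \<inter> {0..1}"
  proof (cases "th \<in> {0..1}")
    case th: True
    have cont: "cont I S qg qn Mkt th = max th (V qn)" by (simp add: cont_def price2_def)
    show ?thesis
    proof (cases "th \<le> th_hat")
      case True
      then show ?thesis
        using pooled_low_payoff[OF same_route th True] low_type_max_V_qn[OF True] cont x th by auto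
    next
      case False
      then show ?thesis
        using payoff_nosale[OF th] nosale_above_bailout[OF th] pooled cont th by auto
    qed
  qed auto
qed

lemma pooled_mkt1_overbid_profitable:
  assumes same_route: "pg + S + V qg = th_hat + V qn" and x: "th_hat < x" "x < th0"
    and p1_low: "p1 < x - S" and funded: "I \<le> x - S"
  shows False
proof -
  define p' where "p' = x - S"
  have V_p': "V p' = x" using funded by (simp add: p'_def sale_val_funded)
  have x01: "0 < x" "x \<le> 1" using x cutoffs th0 by auto
  have "0 < mass f {..x} * (cexp f {..x} - p')"
    using mass_atMost_pos[OF x01] cexp_atMost_gt_shift[OF x01(1) x(2)] by (simp add: p'_def)
  also have "\<dots> = moment f {..<x} - p' * mass f {..<x}"
    using mass_lessThan moment_lessThan moment_eq_mass_cexp[of "{..x}"] by (simp add: algebra_simps)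
  also have "\<dots> = set_lebesgue_integral lborel ({..<x} \<inter> {0..1}) (\<lambda>t. (t - p') * f t)"
    by (rule set_integral_excess[symmetric]) simp
  also have "\<dots> \<le> 0"
    using no_overbid_mkt1[of p'] pooled_mkt1_overbid_attracts[OF same_route x(1)] V_p' p1_low
    by (simp add: p'_def)
  finally show False by simp
qed

lemma pooled_qn_of_low_gov_null:
  assumes null: "mass f low_gov = 0"
  shows "qn = cexp f {..min th2 1}"
proof -
  define e where "e = min th2 1"
  have e: "th_g < e" "e \<le> 1" using bailout_cutoff_lt_late by (auto simp: e_def)
  define A where "A = low_mkt \<union> {th_g<..e}"
  define B where "B = low_gov \<union> low_mkt \<union> {th_g<..e}"
  have meas: "A \<in> sets lborel" "B \<in> sets lborel"
    using low_gov_measurable low_mkt_measurable by (auto simp: A_def B_def)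
  have "mass f (B - A) \<le> mass f low_gov"
    using low_gov_measurable meas by (intro mass_mono) (auto simp: A_def B_def)
  then have "mass f (B - A) = 0" using null mass_nonneg[of "B - A"] meas by auto
  then have "cexp f A = cexp f B" using cexp_null_diff[OF meas] by (auto simp: A_def B_def)
  also have "\<dots> = cexp f {..e}"
  proof (rule cexp_cong)
    have "B \<inter> {0..1} = ((low_gov \<union> low_mkt) \<inter> {0..1}) \<union> ({th_g<..e} \<inter> {0..1})"
      by (auto simp: B_def)
    also have "\<dots> = ({..th_hat} \<inter> {0..1}) \<union> ({th_g<..e} \<inter> {0..1})"
      using low_types_split by simp
    also have "\<dots> = {..e} \<inter> {0..1}" using pooled e by auto
    finally show "B \<inter> {0..1} = {..e} \<inter> {0..1}" .
  qed
  finally show ?thesis using qn_eq_cexp_non_recipients by (simp add: A_def e_def)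
qed

lemma pooled_low_gov_pos: "0 < mass f low_gov"
proof (rule ccontr)
  assume "\<not> 0 < mass f low_gov"
  then have null: "mass f low_gov = 0" using mass_nonneg[OF low_gov_measurable] by simp
  have "th_hat = th0"
    using th_hat_eq_th0_of_low_gov_null[OF null] V_p1_le_bailout_cutoff pooled by simp
  note qn = pooled_qn_of_low_gov_null[OF null]
  show False
  proof (cases "th2 < 1")
    case True
    then have "cexp f {..th2} = th2 - S" using V_qn_eq_late_cutoff V_qn qn by simp
    then have "th2 = th0" using eq_th0_of_fixed_point True cutoffs delayed by simp
    then show False using \<open>th_hat = th0\<close> pooled delayed by simp
  next
    case False
    then have "qn < 1 - S" using cexp_atMost_1 qn by simp
    then show False using late_cutoff_le_V_qn False V_qn by simp
  qed
qed

lemma pooled_routes_equal_of_low_mkt_pos: "0 < mass f low_mkt \<Longrightarrow> V p1 + V qn = pg + S + V qg"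
proof -
  assume mkt: "0 < mass f low_mkt"
  obtain tg where tg: "tg \<in> {0..1}" "tg \<le> th_hat" "s1 tg = Gov"
    using ex_type_of_mass_pos[OF pooled_low_gov_pos] by (auto simp: low_gov_def)
  obtain tm where tm: "tm \<in> {0..1}" "tm \<le> th_hat" "s1 tm = Mkt"
    using ex_type_of_mass_pos[OF mkt] by (auto simp: low_mkt_def)
  show ?thesis
    using low_gov_incentives(2)[OF tg] low_mkt_incentives(2)[OF tm] by (simp add: max_def split: if_splits)
qed

lemma pooled_V_p1_of_low_mkt_pos: "0 < mass f low_mkt \<Longrightarrow> V p1 = th_hat"
proof -
  assume mkt: "0 < mass f low_mkt"
  have th_hat: "th_hat \<in> {0..1}" using cutoffs th_hat_lt_1 by auto
  have "th_hat \<le> V p1"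
  proof (cases "s1 th_hat = Gov")
    case True
    then show ?thesis
      using low_gov_incentives(3)[OF th_hat _ True] pooled_routes_equal_of_low_mkt_pos[OF mkt] by simp
  next
    case False
    then show ?thesis using low_type_gov_or_mkt[OF th_hat] low_mkt_incentives(1)[OF th_hat] by simp
  qed
  then show "V p1 = th_hat" using V_p1_le_bailout_cutoff pooled by simp
qed

lemma pooled_V_qg_of_low_mkt_pos: "0 < mass f low_mkt \<Longrightarrow> V qg = th_hat"
proof (rule ccontr)
  assume mkt: "0 < mass f low_mkt" and "V qg \<noteq> th_hat"
  note gov = pooled_low_gov_pos and V_p1 = pooled_V_p1_of_low_mkt_pos[OF mkt]
    and same_route = pooled_routes_equal_of_low_mkt_pos[OF mkt]
  have p1: "p1 = cexp f low_mkt" "I \<le> p1" "p1 = th_hat - S"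
    using p1_eq_cexp_low_mkt[OF mkt] sale_val_eq_above[OF V_p1] cexp_low_mkt_lt[OF mkt] by auto
  have "th_hat \<le> V qg" using same_route V_p1 V_qn pg_le_qn by simp
  with \<open>V qg \<noteq> th_hat\<close> have above: "th_hat < V qg" by simp
  have qg: "qg = cexp f low_gov" "qg < th_hat"
    using qg_eq_cexp_low_gov[OF gov] cexp_low_gov_lt[OF gov] by auto
  then have "I \<le> qg" using above sale_val_unfunded[of qg I S] by (cases "I \<le> qg") auto
  then have "th_hat - S < qg" using above by (simp add: sale_val_funded)
  \<comment> \<open>The bailout pool is then worth more than \<open>th_hat - S\<close> on average and the market pool exactly
    that much, so the whole pool below \<open>th_hat\<close> is, which places \<open>th_hat\<close> below \<open>th0\<close>.\<close>
  then have "mass f low_gov * (th_hat - S) < mass f low_gov * qg" using gov by simp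
  moreover have "moment f low_gov = mass f low_gov * qg"
    "moment f low_mkt = mass f low_mkt * (th_hat - S)"
    using moment_eq_mass_cexp[OF low_gov_measurable] moment_eq_mass_cexp[OF low_mkt_measurable] qg p1
    by simp_all
  ultimately have "mass f {..th_hat} * (th_hat - S) < moment f {..th_hat}"
    unfolding moment_low_types mass_low_types by (simp add: distrib_right)
  then have "th_hat - S < cexp f {..th_hat}"
    using mass_low_types_pos by (simp add: cexp_eq_moment_div_mass pos_less_divide_eq mult.commute)
  then have below: "th_hat < th0" using lt_th0_of_cexp_gt_shift cutoffs th_hat_lt_1 by simp
  show False
  proof (rule pooled_mkt1_overbid_profitable[of "(th_hat + th0) / 2"])
    show "pg + S + V qg = th_hat + V qn" using same_route V_p1 by simp
    show "th_hat < (th_hat + th0) / 2" "(th_hat + th0) / 2 < th0" using below by auto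
    show "p1 < (th_hat + th0) / 2 - S" "I \<le> (th_hat + th0) / 2 - S"
      using p1 below by (simp_all add: field_simps)
  qed
qed

lemma pooled_qg_of_low_mkt_null:
  assumes null: "mass f low_mkt = 0"
  shows "qg = cexp f {..th_hat}" "V qg = qg + S"
proof -
  show qg: "qg = cexp f {..th_hat}"
    using qg_eq_cexp_low_gov[OF pooled_low_gov_pos] cexp_low_gov_of_low_mkt_null[OF null] by simp
  have "qg < th_hat" using cexp_low_types_lt qg by simp
  then have "I \<le> qg"
    using th_hat_le_V_qg_of_low_mkt_null[OF null] sale_val_unfunded[of qg I S] by (cases "I \<le> qg") auto
  then show "V qg = qg + S" by (simp add: sale_val_funded)
qed

lemma pooled_routes_equal_of_low_mkt_null:
  assumes null: "mass f low_mkt = 0"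
  shows "pg + S + V qg = th_hat + V qn"
proof -
  have "th_hat \<le> pg + S + V qg - V qn"
  proof (rule le_of_bound_off_null_set[OF _ _ low_mkt_measurable null])
    fix th assume th: "0 \<le> th" "th < th_hat" "th \<notin> low_mkt"
    then have "th \<in> {0..1}" "th \<le> th_hat" "s1 th = Gov"
      using th_hat_lt_1 low_type_gov_or_mkt[of th] by (auto simp: low_mkt_def)
    then show "th \<le> pg + S + V qg - V qn" using low_gov_incentives(3) by fastforce
  qed (use cutoffs th_hat_lt_1 in auto)
  then show ?thesis using gov_route_le_bailout_route pooled by simp
qed

lemma pooled_th_hat_eq_th0_of_low_mkt_null:
  assumes null: "mass f low_mkt = 0"
  shows "th_hat = th0"
proof (rule ccontr)
  assume "th_hat \<noteq> th0"
  note qg = pooled_qg_of_low_mkt_null[OF null]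
  have "th_hat \<le> th0"
  proof (rule ccontr)
    assume "\<not> th_hat \<le> th0"
    then have "cexp f {..th_hat} < th_hat - S" using cexp_atMost_lt_shift th_hat_lt_1 by simp
    then show False using qg th_hat_le_V_qg_of_low_mkt_null[OF null] by simp
  qed
  with \<open>th_hat \<noteq> th0\<close> have below: "th_hat < th0" by simp
  then have "qg < p0" using cexp_atMost_strict_mono[of th_hat th0] cutoffs th0 qg p0_def by simp
  moreover have "I \<le> qg" using qg sale_val_unfunded[of qg I S] S_pos by (cases "I \<le> qg") auto
  ultimately have "I + S < th0" using p0_eq by simp
  define x where "x = max ((th_hat + th0) / 2) ((I + S + th0) / 2)"
  have x: "th_hat < x" "x < th0" "I < x - S"
    using below \<open>I + S < th0\<close> by (auto simp: x_def max_def field_simps)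
  show False
  proof (rule pooled_mkt1_overbid_profitable[OF pooled_routes_equal_of_low_mkt_null[OF null] x(1,2)])
    show "p1 < x - S"
      using V_p1_le_bailout_cutoff pooled x sale_val_funded[of I p1 S] by (cases "I \<le> p1") auto
    show "I \<le> x - S" using x by simp
  qed
qed

end

lemma low_values:
  "0 < mass f low_gov \<and> V qg = th_hat \<and> (0 < mass f low_mkt \<longrightarrow> V p1 = th_hat) \<and> V qn = pg + S"
proof (cases "th_hat < th_g")
  case True
  then show ?thesis using separated_low_gov_pos separated_low_values separated_bounds(1) by blast
next
  case False
  then have pooled: "th_hat = th_g" using cutoffs by simp
  show ?thesis
  proof (cases "mass f low_mkt = 0")
    case True
    have "V qg = th_hat"
      using pooled_qg_of_low_mkt_null[OF pooled True] pooled_th_hat_eq_th0_of_low_mkt_null[OF pooled True]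
        p0_def p0_eq by simp
    then show ?thesis
      using pooled_low_gov_pos[OF pooled] pooled_routes_equal_of_low_mkt_null[OF pooled True] True by simp
  next
    case False
    then have mkt: "0 < mass f low_mkt" using mass_nonneg[OF low_mkt_measurable] by simp
    then show ?thesis
      using pooled_low_gov_pos[OF pooled] pooled_V_p1_of_low_mkt_pos[OF pooled mkt]
        pooled_V_qg_of_low_mkt_pos[OF pooled mkt] pooled_routes_equal_of_low_mkt_pos[OF pooled mkt]
      by simp
  qed
qed

end

theorem theorem4:
  fixes f :: "real \<Rightarrow> real" and I S pg th0 p0 :: real
    and s1 :: "real \<Rightarrow> act1" and s2 :: "real \<Rightarrow> act1 \<Rightarrow> bool"
    and p1 qg qn th_hat th_g th2 :: real
  assumes f_meas: "f \<in> borel_measurable lborel"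
    and f_int: "set_integrable lborel {0..1} f"
    and f_pos: "\<forall>x\<in>{0..1}. f x > 0"
    and f_total: "set_lebesgue_integral lborel {0..1} f = 1"
    and f_logconc: "strictly_log_concave_on {0..1} f"
    and f_mono: "\<forall>b\<in>{0<..1}. strict_mono_on {0<..<b} (\<lambda>a. 2 * cexp f {a<..<b} - cexp f {..a})"
    and I_pos: "0 < I" and S_pos: "0 < S"
    and th0: "0 < th0" "th0 < 1" "th0 - S = cexp f {..th0}"
    and th0_unique: "\<forall>x\<in>{0<..<1}. x - S = cexp f {..x} \<longrightarrow> x = th0"
    and p0_def: "p0 = cexp f {..th0}"
    and p0_I: "I \<le> p0"
    and pg: "p0 < pg" "pg < 1 - S"
    and eq: "transparent_eq f I S pg s1 s2 p1 qg qn"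
    and cut: "has_cutoffs s1 s2 th_hat th_g th2"
    and delayed: "th_g < th2"
  shows "th_hat = th0 \<and> th0 \<le> th_g \<and> th_g < pg + S \<and> th2 = pg + S \<and>
    \<comment> \<open>(i)\<close>
    (\<forall>th\<in>{0..th0}. sells1 s1 th \<and> sells2 s1 s2 th) \<and>
    mass f {th. th \<le> th0 \<and> s1 th = Gov} > 0 \<and>
    \<comment> \<open>(ii)\<close>
    (mass f {th. th \<le> th0 \<and> s1 th = Mkt} > 0 \<longrightarrow>
       p1 = p0 \<and> qn = pg \<and> cexp f {th. th \<le> th0 \<and> s1 th = Mkt} = p0) \<and>
    qg = p0 \<and> cexp f {th. th \<le> th0 \<and> s1 th = Gov} = p0 \<and>
    \<comment> \<open>(iii)\<close>
    (\<forall>th\<in>{0..1}. th0 < th \<and> th \<le> th_g \<longrightarrow> s1 th = Gov \<and> \<not> sells2 s1 s2 th) \<and>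
    \<comment> \<open>(iv)\<close>
    (\<forall>th\<in>{0..1}. th_g < th \<and> th \<le> pg + S \<longrightarrow> \<not> sells1 s1 th \<and> sells2 s1 s2 th) \<and>
    qn = pg \<and>
    (\<forall>th\<in>{0..1}. pg + S < th \<longrightarrow> \<not> sells1 s1 th \<and> \<not> sells2 s1 s2 th)"
proof -
  interpret delayed_stimulation f I S pg th0 p0 s1 s2 p1 qg qn th_hat th_g th2
    by unfold_locales (fact assms)+
  have low: "0 < mass f low_gov" "V qg = th_hat" "0 < mass f low_mkt \<Longrightarrow> V p1 = th_hat"
    "V qn = pg + S"
    using low_values by auto
  have prices: "th_hat = th0" "qg = p0" "cexp f low_gov = p0"
    "0 < mass f low_mkt \<Longrightarrow> p1 = p0 \<and> cexp f low_mkt = p0"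
    using low_prices_of_low_values[OF low(1-3)] by auto
  have qn: "qn = pg" using low(4) V_qn by simp
  have th2: "th2 = pg + S"
    using V_qn_eq_late_cutoff late_cutoff_le_V_qn low(4) pg by (cases "th2 < 1") auto
  have th_g: "th_g < pg + S" using bailout_cutoff_lt_V_qn low(4) by simp
  have low_sets: "low_gov = {th. th \<le> th0 \<and> s1 th = Gov}" "low_mkt = {th. th \<le> th0 \<and> s1 th = Mkt}"
    unfolding low_gov_def low_mkt_def using prices(1) by simp_all
  show ?thesis
    using low(1) prices qn th2 th_g low_sets cutoffs th0
      low_type bailout_type late_type inactive_type
    unfolding sells1_def sells2_def by auto
qed

end
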